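(* Let $R \ge 0$ and let $X$ be an $R$-rough geodesic metric space. The following conditions are equivalent. (1) $X$ is strongly shortcut. (2) There exists $L > 1$ such that there is a bound on the lengths $|S|$ of the Riemannian circles $S$ admitting an $(L,4R)$-quasi-isometric embedding $S \to X$. (3) There exists $L > 1$ such that for every $C \ge 0$ there is a bound on the lengths $|S|$ of the Riemannian circles $S$ admitting an $(L,C)$-quasi-isometric embedding $S \to X$. (4) $X$ does not approximate $n$-gons. (5) No asymptotic cone of $X$ contains an isometric copy of the Riemannian circle of unit length.
   Context: A Riemannian circle $S$ is a circle with its length (intrinsic) metric; $|S|$ denotes its length. For $R \ge 0$, a map $f\colon A \to B$ of metric spaces is an $R$-rough isometric embedding if $d(a,a') - R \le d(f(a),f(a')) \le d(a,a') + R$ for all $a,a'$. An $R$-rough geodesic from $x_1$ to $x_2$ is an $R$-rough isometric embedding $f\colon[0,\ell]\to X$ with $\ell = d(x_1,x_2)$, $f(0)=x_1$, $f(\ell)=x_2$; $X$ is $R$-rough geodesic if every pair of points is joined by an $R$-rough geodesic. An $R$-circle in $X$ is a map $\alpha\colon S\to X$ from a Riemannian circle with $d(\alpha(p),\alpha(q)) \le d_S(p,q) + R$ for all $p,q$. For $K>1$, an $R$-circle $\alpha$ is $\frac1K$-almost isometric if $d(\alpha(p),\alpha(\bar p)) \ge \frac1K\cdot\frac{|S|}{2}$ for every pair of antipodal points $p,\bar p\in S$. The $R$-rough geodesic space $X$ is strongly shortcut if for some $K>1$ there is a bound on the lengths $|S|$ of the $\frac1K$-almost isometric $R$-circles $\alpha\colon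 S\to X$. A map $f$ is an $(L,C)$-quasi-isometric embedding if $\frac1L d(a,a') - C \le d(f(a),f(a')) \le L d(a,a') + C$ for all $a,a'$. For $n\in\mathbb N$, $S_n$ is the cycle graph of length $n$ (a Riemannian circle of length $n$ with $n$ vertices equally spaced), $S_n^0$ its vertex set with the induced metric, and $\lambda S_n^0$ is $S_n^0$ with the metric multiplied by $\lambda>0$. A metric space $X$ approximates $n$-gons if for every $K>1$ and every $n\in\mathbb N$ there exist $K$-bilipschitz embeddings $\lambda S_n^0 \to X$ for arbitrarily large $\lambda>0$. Asymptotic cone: given a nonprincipal ultrafilter $\mathscr U$ on $\mathbb N$, a sequence $(b^{(m)})$ in $X$ and positive reals $s^{(m)}\to\infty$, consider sequences $(x_m)$ in $X$ with $d(x_m,b^{(m)})/s^{(m)}$ bounded, with pseudometric $\bar d((x_m),(x'_m)) = \lim_{\mathscr U} d(x_m,x'_m)/s^{(m)}$; the asymptotic cone is the associated metric quotient. *)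

theory Defs
  imports "HOL-Analysis.Analysis"
begin

text \<open>The Riemannian circle of length c > 0, modelled on the carrier {0..<c}
  with the intrinsic (arc-length) metric. Every Riemannian circle of length c
  is isometric to this model.\<close>

definition circle_pts :: "real \<Rightarrow> real set" where
  "circle_pts c = {0..<c}"

definition circle_dist :: "real \<Rightarrow> real \<Rightarrow> real \<Rightarrow> real" where
  "circle_dist c s t = min \<bar>s - t\<bar> (c - \<bar>s - t\<bar>)"

definition cycle_verts :: "nat \<Rightarrow> nat set" where
  "cycle_verts n = {0..<n}"

definition scaled_cycle_dist :: "real \<Rightarrow> nat \<Rightarrow> nat \<Rightarrow> nat \<Rightarrow> real" where
  "scaled_cycle_dist lam n i j =
     lam * min \<bar>real i - real j\<bar> (real n - \<bar>real i - real j\<bar>)"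

definition rough_isometric_embedding ::
  "'b set \<Rightarrow> ('b \<Rightarrow> 'b \<Rightarrow> real) \<Rightarrow> 'a set \<Rightarrow> ('a \<Rightarrow> 'a \<Rightarrow> real) \<Rightarrow> real \<Rightarrow> ('b \<Rightarrow> 'a) \<Rightarrow> bool" where
  "rough_isometric_embedding A dA X d R f \<longleftrightarrow>
     f ` A \<subseteq> X \<and>
     (\<forall>a\<in>A. \<forall>a'\<in>A. dA a a' - R \<le> d (f a) (f a') \<and> d (f a) (f a') \<le> dA a a' + R)"

definition quasi_isometric_embedding ::
  "'b set \<Rightarrow> ('b \<Rightarrow> 'b \<Rightarrow> real) \<Rightarrow> 'a set \<Rightarrow> ('a \<Rightarrow> 'a \<Rightarrow> real) \<Rightarrow> real \<Rightarrow> real \<Rightarrow> ('b \<Rightarrow> 'a) \<Rightarrow> bool" where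
  "quasi_isometric_embedding A dA X d L C f \<longleftrightarrow>
     f ` A \<subseteq> X \<and>
     (\<forall>a\<in>A. \<forall>a'\<in>A. (1 / L) * dA a a' - C \<le> d (f a) (f a') \<and> d (f a) (f a') \<le> L * dA a a' + C)"

definition bilipschitz_embedding ::
  "'b set \<Rightarrow> ('b \<Rightarrow> 'b \<Rightarrow> real) \<Rightarrow> 'a set \<Rightarrow> ('a \<Rightarrow> 'a \<Rightarrow> real) \<Rightarrow> real \<Rightarrow> ('b \<Rightarrow> 'a) \<Rightarrow> bool" where
  "bilipschitz_embedding A dA X d K f \<longleftrightarrow>
     f ` A \<subseteq> X \<and>
     (\<forall>a\<in>A. \<forall>a'\<in>A. (1 / K) * dA a a' \<le> d (f a) (f a') \<and> d (f a) (f a') \<le> K * dA a a')"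

definition rough_geodesic :: "'a set \<Rightarrow> ('a \<Rightarrow> 'a \<Rightarrow> real) \<Rightarrow> real \<Rightarrow> 'a \<Rightarrow> 'a \<Rightarrow> (real \<Rightarrow> 'a) \<Rightarrow> bool" where
  "rough_geodesic X d R x1 x2 f \<longleftrightarrow>
     rough_isometric_embedding {0..d x1 x2} (\<lambda>s t. \<bar>s - t\<bar>) X d R f \<and>
     f 0 = x1 \<and> f (d x1 x2) = x2"

definition rough_geodesic_space :: "'a set \<Rightarrow> ('a \<Rightarrow> 'a \<Rightarrow> real) \<Rightarrow> real \<Rightarrow> bool" where
  "rough_geodesic_space X d R \<longleftrightarrow> (\<forall>x1\<in>X. \<forall>x2\<in>X. \<exists>f. rough_geodesic X d R x1 x2 f)"

definition R_circle :: "'a set \<Rightarrow> ('a \<Rightarrow> 'a \<Rightarrow> real) \<Rightarrow> real \<Rightarrow> real \<Rightarrow> (real \<Rightarrow> 'a) \<Rightarrow> bool" where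
  "R_circle X d R c \<alpha> \<longleftrightarrow>
     c > 0 \<and> \<alpha> ` circle_pts c \<subseteq> X \<and>
     (\<forall>p\<in>circle_pts c. \<forall>q\<in>circle_pts c. d (\<alpha> p) (\<alpha> q) \<le> circle_dist c p q + R)"

text \<open>Antipodal points of the circle of length c are those at distance c/2.\<close>

definition almost_isometric :: "('a \<Rightarrow> 'a \<Rightarrow> real) \<Rightarrow> real \<Rightarrow> real \<Rightarrow> (real \<Rightarrow> 'a) \<Rightarrow> bool" where
  "almost_isometric d K c \<alpha> \<longleftrightarrow>
     (\<forall>p\<in>circle_pts c. \<forall>q\<in>circle_pts c. circle_dist c p q = c / 2 \<longrightarrow>
        d (\<alpha> p) (\<alpha> q) \<ge> (1 / K) * (c / 2))"

definition strongly_shortcut :: "'a set \<Rightarrow> ('a \<Rightarrow> 'a \<Rightarrow> real) \<Rightarrow> real \<Rightarrow> bool" where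
  "strongly_shortcut X d R \<longleftrightarrow>
     (\<exists>K>1. \<exists>B. \<forall>c \<alpha>. R_circle X d R c \<alpha> \<and> almost_isometric d K c \<alpha> \<longrightarrow> c \<le> B)"

definition approximates_ngons :: "'a set \<Rightarrow> ('a \<Rightarrow> 'a \<Rightarrow> real) \<Rightarrow> bool" where
  "approximates_ngons X d \<longleftrightarrow>
     (\<forall>K>1. \<forall>n::nat. n \<ge> 1 \<longrightarrow> (\<forall>\<Lambda>. \<exists>lam>\<Lambda>. \<exists>f.
        bilipschitz_embedding (cycle_verts n) (scaled_cycle_dist lam n) X d K f))"

definition nonprincipal_ultrafilter :: "nat filter \<Rightarrow> bool" where
  "nonprincipal_ultrafilter U \<longleftrightarrow>
     U \<noteq> bot \<and> (\<forall>P. eventually P U \<or> eventually (\<lambda>m. \<not> P m) U) \<and>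
     (\<forall>n. eventually (\<lambda>m. m \<noteq> n) U)"

definition ulim :: "nat filter \<Rightarrow> (nat \<Rightarrow> real) \<Rightarrow> real" where
  "ulim U f = Lim U f"

definition cone_seqs ::
  "'a set \<Rightarrow> ('a \<Rightarrow> 'a \<Rightarrow> real) \<Rightarrow> (nat \<Rightarrow> 'a) \<Rightarrow> (nat \<Rightarrow> real) \<Rightarrow> (nat \<Rightarrow> 'a) set" where
  "cone_seqs X d b s = {x. (\<forall>m. x m \<in> X) \<and> bounded (range (\<lambda>m. d (x m) (b m) / s m))}"

definition cone_pdist ::
  "('a \<Rightarrow> 'a \<Rightarrow> real) \<Rightarrow> nat filter \<Rightarrow> (nat \<Rightarrow> real) \<Rightarrow> (nat \<Rightarrow> 'a) \<Rightarrow> (nat \<Rightarrow> 'a) \<Rightarrow> real" where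
  "cone_pdist d U s x y = ulim U (\<lambda>m. d (x m) (y m) / s m)"

definition cone_rel ::
  "'a set \<Rightarrow> ('a \<Rightarrow> 'a \<Rightarrow> real) \<Rightarrow> nat filter \<Rightarrow> (nat \<Rightarrow> 'a) \<Rightarrow> (nat \<Rightarrow> real) \<Rightarrow> ((nat \<Rightarrow> 'a) \<times> (nat \<Rightarrow> 'a)) set" where
  "cone_rel X d U b s = {(x, y). x \<in> cone_seqs X d b s \<and> y \<in> cone_seqs X d b s \<and> cone_pdist d U s x y = 0}"

definition asymptotic_cone ::
  "'a set \<Rightarrow> ('a \<Rightarrow> 'a \<Rightarrow> real) \<Rightarrow> nat filter \<Rightarrow> (nat \<Rightarrow> 'a) \<Rightarrow> (nat \<Rightarrow> real) \<Rightarrow> (nat \<Rightarrow> 'a) set set" where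
  "asymptotic_cone X d U b s = cone_seqs X d b s // cone_rel X d U b s"

text \<open>Quotient metric on classes (well defined: independent of representatives).\<close>

definition cone_dist ::
  "('a \<Rightarrow> 'a \<Rightarrow> real) \<Rightarrow> nat filter \<Rightarrow> (nat \<Rightarrow> real) \<Rightarrow> (nat \<Rightarrow> 'a) set \<Rightarrow> (nat \<Rightarrow> 'a) set \<Rightarrow> real" where
  "cone_dist d U s A B = cone_pdist d U s (SOME x. x \<in> A) (SOME y. y \<in> B)"

definition asymptotic_cone_data ::
  "'a set \<Rightarrow> nat filter \<Rightarrow> (nat \<Rightarrow> 'a) \<Rightarrow> (nat \<Rightarrow> real) \<Rightarrow> bool" where
  "asymptotic_cone_data X U b s \<longleftrightarrow>
     nonprincipal_ultrafilter U \<and> (\<forall>m. b m \<in> X) \<and> (\<forall>m. s m > 0) \<and>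
     filterlim s at_top sequentially"

definition cone_contains_unit_circle :: "'a set \<Rightarrow> ('a \<Rightarrow> 'a \<Rightarrow> real) \<Rightarrow> bool" where
  "cone_contains_unit_circle X d \<longleftrightarrow>
     (\<exists>U b s. asymptotic_cone_data X U b s \<and>
       (\<exists>f. f ` circle_pts 1 \<subseteq> asymptotic_cone X d U b s \<and>
            (\<forall>p\<in>circle_pts 1. \<forall>q\<in>circle_pts 1. cone_dist d U s (f p) (f q) = circle_dist 1 p q)))"

end

theory Submission
  imports Defs
begin

text \<open>If \<open>X\<close> is not strongly shortcut,
  it contains \<open>R\<close>-circles of lengths \<open>c\<^sub>m \<rightarrow> \<infinity>\<close> whose antipodal points are almost \<open>c\<^sub>m / 2\<close>
  apart; rescaled by \<open>c\<^sub>m\<close> they converge in an asymptotic cone to an isometric copy of the unit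
  circle. Finitely many equally spaced points of that circle, pulled back along the ultrafilter,
  are \<open>K\<close>-bilipschitz \<open>n\<close>-gons of arbitrarily large scale. Conversely, joining the vertices of
  such an \<open>n\<close>-gon by rough geodesics gives long \<open>R\<close>-circles with far apart antipodes, so \<open>X\<close>
  is not strongly shortcut; cutting the corners of the same polygon along nearly optimal
  rough-geodesic chords gives long \<open>(L, 4 R)\<close>-quasi-isometric circles. Finally, a long
  \<open>(L, C)\<close>-quasi-isometric circle restricted to equally spaced points is a bilipschitz
  \<open>n\<close>-gon.\<close>

section \<open>Circles and cycle graphs\<close>

lemma circle_dist_commute: "circle_dist c p q = circle_dist c q p"
  unfolding circle_dist_def by (simp add: abs_minus_commute)

lemma circle_dist_mult:
  assumes "lam \<ge> 0"
  shows "circle_dist (lam * c) (lam * s) (lam * t) = lam * circle_dist c s t"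
proof -
  have "\<bar>lam * s - lam * t\<bar> = lam * \<bar>s - t\<bar>"
    using assms by (simp add: abs_mult flip: right_diff_distrib)
  then show ?thesis
    unfolding circle_dist_def using assms by (simp add: min_mult_distrib_left right_diff_distrib)
qed

lemma scaled_cycle_dist_eq_circle_dist:
  "scaled_cycle_dist lam n i j = lam * circle_dist (real n) (real i) (real j)"
  unfolding scaled_cycle_dist_def circle_dist_def ..

lemma circle_dist_distinct_vertices:
  "i < n \<Longrightarrow> j < n \<Longrightarrow> i \<noteq> j \<Longrightarrow> 1 \<le> circle_dist (real n) (real i) (real j)"
  unfolding circle_dist_def by (auto simp: min_def abs_if)

lemma circle_antipode:
  assumes "0 \<le> p" "p < c" "0 \<le> q" "q < c"
  defines "q' \<equiv> (if q < c / 2 then q + c / 2 else q - c / 2)"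
  shows "q' \<in> circle_pts c" "circle_dist c q q' = c / 2"
    and "circle_dist c p q' = c / 2 - circle_dist c p q"
  using assms unfolding circle_dist_def circle_pts_def by (auto simp: min_def abs_if)

definition cyclic_dist :: "nat \<Rightarrow> nat \<Rightarrow> nat \<Rightarrow> real" where
  "cyclic_dist n i j = circle_dist (real n) (real (i mod n)) (real (j mod n))"

lemma cyclic_dist_add:
  assumes "q < n"
  shows "cyclic_dist n a (a + q) = min (real q) (real n - real q)"
proof (cases "a mod n + q < n")
  case True
  then have "(a + q) mod n = a mod n + q"
    by (metis mod_add_left_eq mod_less)
  then show ?thesis unfolding cyclic_dist_def circle_dist_def by (simp add: min_def)
next
  case False
  have "a mod n < n" using assms by simp
  then have "a mod n + q - n < n" using assms by linarith
  then have "(a mod n + q) mod n = a mod n + q - n"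
    using False by (simp add: le_mod_geq)
  then have "(a + q) mod n = a mod n + q - n"
    by (metis mod_add_left_eq)
  then have "real ((a + q) mod n) = real (a mod n) + real q - real n"
    using False by (simp add: of_nat_diff)
  then show ?thesis unfolding cyclic_dist_def circle_dist_def using assms by (simp add: min.commute)
qed

lemma cyclic_dist_Suc: "n \<ge> 2 \<Longrightarrow> cyclic_dist n k (Suc k) = 1"
  using cyclic_dist_add[of 1 n k] by simp

lemma cyclic_dist_Suc_Suc: "n \<ge> 4 \<Longrightarrow> cyclic_dist n k (Suc (Suc k)) = 2"
  using cyclic_dist_add[of 2 n k] by simp

lemma (in Metric_space) mdist_diff_le:
  assumes "x \<in> M" "x' \<in> M" "y \<in> M" "y' \<in> M"
  shows "\<bar>d x' y' - d x y\<bar> \<le> d x x' + d y y'"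
  using mdist_reverse_triangle[of x' y' x] mdist_reverse_triangle[of y' x y] assms
    commute[of x' x] commute[of y' y] commute[of x y']
  by linarith

lemma quasi_isometric_embedding_comp:
  assumes "quasi_isometric_embedding A dA X d L C f"
    and "v ` S \<subseteq> A" and "\<And>a a'. a \<in> S \<Longrightarrow> a' \<in> S \<Longrightarrow> dA (v a) (v a') = dS a a'"
  shows "quasi_isometric_embedding S dS X d L C (f \<circ> v)"
  unfolding quasi_isometric_embedding_def
proof (intro conjI ballI)
  show "(f \<circ> v) ` S \<subseteq> X"
    using assms(1,2) unfolding quasi_isometric_embedding_def by auto
  fix a a' assume a: "a \<in> S" and a': "a' \<in> S"
  then have "v a \<in> A" "v a' \<in> A" using assms(2) by auto
  then show "1 / L * dS a a' - C \<le> d ((f \<circ> v) a) ((f \<circ> v) a')"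
    and "d ((f \<circ> v) a) ((f \<circ> v) a') \<le> L * dS a a' + C"
    using assms(1) assms(3)[OF a a', symmetric] unfolding quasi_isometric_embedding_def by auto
qed

lemma bilipschitz_embedding_if_quasi_isometric_separated:
  assumes X: "Metric_space X d" and f: "quasi_isometric_embedding S dS X d L C f"
    and diag: "\<And>a. a \<in> S \<Longrightarrow> dS a a = 0"
    and sep: "\<And>a a'. a \<in> S \<Longrightarrow> a' \<in> S \<Longrightarrow> a \<noteq> a' \<Longrightarrow> r \<le> dS a a'"
    and L: "0 < L" "L < K" and C: "C \<le> r * (1 / L - 1 / K)" "C \<le> r * (K - L)"
  shows "bilipschitz_embedding S dS X d K f"
proof -
  have f_in: "f ` S \<subseteq> X" using f unfolding quasi_isometric_embedding_def by blast
  have "1 / K * dS a a' \<le> d (f a) (f a') \<and> d (f a) (f a') \<le> K * dS a a'"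
    if a: "a \<in> S" and a': "a' \<in> S" for a a'
  proof (cases "a = a'")
    case True
    then show ?thesis using diag a f_in Metric_space.zero[OF X, of "f a" "f a"] by auto
  next
    case False
    have "r * (1 / L - 1 / K) \<le> dS a a' * (1 / L - 1 / K)" "r * (K - L) \<le> dS a a' * (K - L)"
      using sep[OF a a' False] L by (simp_all add: mult_right_mono frac_le)
    then have "C \<le> dS a a' * (1 / L - 1 / K)" "C \<le> dS a a' * (K - L)"
      using C by linarith+
    moreover have "1 / L * dS a a' - C \<le> d (f a) (f a')" "d (f a) (f a') \<le> L * dS a a' + C"
      using f a a' unfolding quasi_isometric_embedding_def by auto
    ultimately show ?thesis by (simp add: algebra_simps)
  qed
  then show ?thesis unfolding bilipschitz_embedding_def using f_in by blast
qed

lemma cycle_vertices_in_circle: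
  assumes "0 < lam" "i < n"
  shows "real i * lam \<in> circle_pts (real n * lam)"
  using assms by (simp add: circle_pts_def)

lemma circle_dist_cycle_vertices:
  "0 \<le> lam \<Longrightarrow> circle_dist (real n * lam) (real i * lam) (real j * lam) = scaled_cycle_dist lam n i j"
  using circle_dist_mult[of lam "real n" "real i" "real j"]
  by (simp add: scaled_cycle_dist_eq_circle_dist mult.commute)

lemma approximates_ngons_if_long_quasi_circles:
  assumes X: "Metric_space X d"
    and long: "\<forall>L>1. \<exists>C\<ge>0. \<forall>B. \<exists>c f. c > 0 \<and>
              quasi_isometric_embedding (circle_pts c) (circle_dist c) X d L C f \<and> B < c"
  shows "approximates_ngons X d"
  unfolding approximates_ngons_def
proof (intro allI impI)
  fix K :: real and n :: nat and \<Lambda> :: real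
  assume K: "K > 1" and n: "n \<ge> 1"
  define L where "L = sqrt K"
  have L: "1 < L" "L < K"
    using K real_sqrt_less_iff[of K "K * K"] by (auto simp: L_def real_sqrt_gt_1_iff)
  have gaps: "0 < 1 / L - 1 / K" "0 < K - L" using L by (auto simp: frac_less2)
  obtain C where C: "\<forall>B. \<exists>c f. c > 0 \<and>
      quasi_isometric_embedding (circle_pts c) (circle_dist c) X d L C f \<and> B < c"
    using long L by blast
  define M where "M = max (max \<Lambda> 0) (max (C / (1 / L - 1 / K)) (C / (K - L)))"
  obtain c f where "c > 0" and f: "quasi_isometric_embedding (circle_pts c) (circle_dist c) X d L C f"
    and c: "c > real n * M"
    using C by blast
  define lam where "lam = c / real n"
  have lam: "lam > M" "c = real n * lam" using c n by (auto simp: lam_def field_simps)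
  then have "lam > 0" "lam > \<Lambda>" "C \<le> lam * (1 / L - 1 / K)" "C \<le> lam * (K - L)"
    using gaps by (auto simp: M_def pos_divide_less_eq mult.commute)
  moreover have "quasi_isometric_embedding (cycle_verts n) (scaled_cycle_dist lam n) X d L C
      (f \<circ> (\<lambda>i. real i * lam))"
    using \<open>lam > 0\<close> f unfolding lam(2)
    by (intro quasi_isometric_embedding_comp)
      (auto simp: cycle_verts_def cycle_vertices_in_circle circle_dist_cycle_vertices)
  ultimately have "bilipschitz_embedding (cycle_verts n) (scaled_cycle_dist lam n) X d K
      (f \<circ> (\<lambda>i. real i * lam))"
    using L X by (intro bilipschitz_embedding_if_quasi_isometric_separated[where r = lam])
      (auto simp: scaled_cycle_dist_eq_circle_dist cycle_verts_def circle_dist_def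
        intro: mult_left_mono[of 1, simplified] circle_dist_distinct_vertices)
  then show "\<exists>lam>\<Lambda>. \<exists>f. bilipschitz_embedding (cycle_verts n) (scaled_cycle_dist lam n) X d K f"
    using \<open>lam > \<Lambda>\<close> by blast
qed

section \<open>Ultrafilters and asymptotic cones\<close>

lemma ultrafilter_if_maximal:
  fixes F :: "'a filter"
  assumes "F \<noteq> bot" and maximal: "\<And>G. G \<noteq> bot \<Longrightarrow> G \<le> F \<Longrightarrow> F = G"
  shows "eventually P F \<or> eventually (\<lambda>x. \<not> P x) F"
proof (rule disjCI)
  assume "\<not> eventually (\<lambda>x. \<not> P x) F"
  then have "inf F (principal {x. P x}) \<noteq> bot"
    by (simp add: trivial_limit_def eventually_inf_principal)
  then have F: "F = inf F (principal {x. P x})" by (rule maximal) simp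
  show "eventually P F" by (subst F) (simp add: eventually_inf_principal)
qed

lemma Inf_filter_chain_proper:
  fixes C :: "'a filter set"
  assumes "C \<noteq> {}" "bot \<notin> C" and chain: "\<And>F G. F \<in> C \<Longrightarrow> G \<in> C \<Longrightarrow> F \<le> G \<or> G \<le> F"
  shows "Inf C \<noteq> bot"
proof -
  have "Inf C = bot \<longleftrightarrow> (\<exists>F\<in>C. F = bot)"
    unfolding trivial_limit_def
  proof (intro eventually_Inf_base assms(1))
    fix F G assume FG: "F \<in> C" "G \<in> C"
    then show "\<exists>H\<in>C. H \<le> inf F G"
      using chain[OF FG] by (elim disjE) (auto simp: inf_absorb1 inf_absorb2)
  qed
  with assms(2) show ?thesis by auto
qed

lemma exists_ultrafilter_le:
  fixes F :: "'a filter"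
  assumes F: "F \<noteq> bot"
  shows "\<exists>U\<le>F. U \<noteq> bot \<and> (\<forall>P. eventually P U \<or> eventually (\<lambda>x. \<not> P x) U)"
proof -
  define R where "R = {(G, H). H \<noteq> bot \<and> H \<le> G \<and> G \<le> (F :: 'a filter)}"
  have field: "Field R = {G. G \<noteq> bot \<and> G \<le> F}"
    by (auto simp: R_def Field_def bot_unique)
  have "\<exists>U\<in>Field R. \<forall>G\<in>Field R. (U, G) \<in> R \<longrightarrow> G = U"
  proof (rule Zorns_po_lemma)
    show "Partial_order R"
      by (auto simp: R_def partial_order_on_def preorder_on_def
          antisym_def refl_on_def trans_def Field_def bot_unique)
    show "\<exists>U\<in>Field R. \<forall>G\<in>C. (G, U) \<in> R" if C: "C \<in> Chains R" for C
    proof (cases "C = {}")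
      case True
      then show ?thesis using F field by auto
    next
      case False
      have below: "G \<noteq> bot \<and> G \<le> F" if "G \<in> C" for G
        using C that by (auto simp: Chains_def R_def)
      have "Inf C \<noteq> bot"
        using False below C by (intro Inf_filter_chain_proper) (auto simp: Chains_def R_def)
      moreover obtain G where "G \<in> C" using False by blast
      then have "Inf C \<le> F"
        using below by (meson Inf_lower order_trans)
      ultimately have "Inf C \<in> Field R"
        unfolding field by simp
      moreover have "\<forall>G\<in>C. (G, Inf C) \<in> R"
        using below \<open>Inf C \<noteq> bot\<close> unfolding R_def by (auto intro: Inf_lower)
      ultimately show ?thesis by blast
    qed
  qed
  then obtain U where U: "U \<noteq> bot" "U \<le> F" and max: "\<And>G. G \<in> Field R \<Longrightarrow> (U, G) \<in> R \<Longrightarrow> G = U"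
    unfolding field by blast
  have "eventually P U \<or> eventually (\<lambda>x. \<not> P x) U" for P
  proof (rule ultrafilter_if_maximal[OF U(1)])
    fix G assume G: "G \<noteq> bot" "G \<le> U"
    have "G \<le> F" using G(2) U(2) by (rule order_trans)
    then have "G \<in> Field R" unfolding field using G by simp
    moreover have "(U, G) \<in> R" unfolding R_def using G U by simp
    ultimately show "U = G" by (metis max)
  qed
  then show ?thesis using U by blast
qed

lemma exists_nonprincipal_ultrafilter: "\<exists>U. nonprincipal_ultrafilter U"
proof -
  obtain U where U: "U \<le> sequentially" "U \<noteq> bot" "\<forall>P. eventually P U \<or> eventually (\<lambda>x. \<not> P x) U"
    using exists_ultrafilter_le[of "sequentially :: nat filter"] by auto
  have "eventually (\<lambda>m. m \<noteq> n) U" for n :: nat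
  proof -
    have "eventually (\<lambda>m. m \<noteq> n) sequentially"
      using eventually_gt_at_top[of n] by (rule eventually_mono) simp
    then show ?thesis using U(1) by (simp add: le_filter_def)
  qed
  then show ?thesis using U unfolding nonprincipal_ultrafilter_def by blast
qed

lemma nonprincipal_ultrafilter_le_sequentially:
  assumes "nonprincipal_ultrafilter U"
  shows "U \<le> sequentially"
  unfolding le_filter_def
proof (intro allI impI)
  fix P assume "eventually P sequentially"
  then obtain N where N: "\<And>m. m \<ge> N \<Longrightarrow> P m" by (auto simp: eventually_sequentially)
  have "eventually (\<lambda>m. \<forall>y\<in>{..<N}. m \<noteq> y) U"
    using assms unfolding nonprincipal_ultrafilter_def by (intro eventually_ball_finite) auto
  then show "eventually P U" by (rule eventually_mono) (metis N lessThan_iff not_le)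
qed

lemma nonprincipal_ultrafilter_convergent:
  fixes g :: "nat \<Rightarrow> real"
  assumes U: "nonprincipal_ultrafilter U" and "bounded (range g)"
  shows "\<exists>l. (g \<longlongrightarrow> l) U"
proof -
  obtain M where M: "\<And>m. \<bar>g m\<bar> \<le> M" using assms(2) by (auto simp: bounded_iff)
  have "filtermap g U \<noteq> bot"
    using U by (simp add: filtermap_bot_iff nonprincipal_ultrafilter_def)
  moreover have "eventually (\<lambda>x. x \<in> cball 0 M) (filtermap g U)"
    using M by (simp add: eventually_filtermap dist_real_def)
  ultimately obtain l where l: "inf (nhds l) (filtermap g U) \<noteq> bot"
    using compact_cball[of 0 M] unfolding compact_filter by blast
  have "eventually (\<lambda>m. g m \<in> S) U" if "open S" "l \<in> S" for S
  proof -
    have "\<not> eventually (\<lambda>m. g m \<notin> S) U"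
    proof
      assume "eventually (\<lambda>m. g m \<notin> S) U"
      then have "eventually (\<lambda>x. x \<notin> S) (filtermap g U)"
        by (simp add: eventually_filtermap)
      then have "eventually (\<lambda>x. False) (inf (nhds l) (filtermap g U))"
        using eventually_nhds_in_open[OF that] unfolding eventually_inf by blast
      then show False using l by (simp add: eventually_False)
    qed
    then show ?thesis using U unfolding nonprincipal_ultrafilter_def by blast
  qed
  then show ?thesis unfolding tendsto_def by blast
qed

locale cone_setting = Metric_space X d for X :: "'a set" and d +
  fixes U :: "nat filter" and b :: "nat \<Rightarrow> 'a" and s :: "nat \<Rightarrow> real"
  assumes data: "asymptotic_cone_data X U b s"
begin

abbreviation "seqs \<equiv> cone_seqs X d b s"
abbreviation "pdist \<equiv> cone_pdist d U s"
abbreviation "rel \<equiv> cone_rel X d U b s"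

lemma U_ultra: "nonprincipal_ultrafilter U"
  and base_in: "b m \<in> X"
  and scale_pos: "0 < s m"
  and scale_at_top: "filterlim s at_top sequentially"
  using data unfolding asymptotic_cone_data_def by auto

lemma U_proper: "U \<noteq> bot"
  using U_ultra unfolding nonprincipal_ultrafilter_def by blast

lemma U_le_sequentially: "U \<le> sequentially"
  using U_ultra by (rule nonprincipal_ultrafilter_le_sequentially)

lemma seqs_in: "x \<in> seqs \<Longrightarrow> x m \<in> X"
  unfolding cone_seqs_def by blast

lemma ratio_bounded:
  assumes x: "x \<in> seqs" and y: "y \<in> seqs"
  shows "bounded (range (\<lambda>m. d (x m) (y m) / s m))"
proof -
  obtain Mx where Mx: "\<And>m. \<bar>d (x m) (b m) / s m\<bar> \<le> Mx"
    using x unfolding cone_seqs_def bounded_iff real_norm_def by blast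
  obtain My where My: "\<And>m. \<bar>d (y m) (b m) / s m\<bar> \<le> My"
    using y unfolding cone_seqs_def bounded_iff real_norm_def by blast
  have "\<bar>d (x m) (y m) / s m\<bar> \<le> Mx + My" for m
  proof -
    have "d (x m) (y m) \<le> d (x m) (b m) + d (y m) (b m)"
      using triangle'[OF seqs_in[OF x] base_in seqs_in[OF y]] .
    then have "d (x m) (y m) / s m \<le> d (x m) (b m) / s m + d (y m) (b m) / s m"
      using scale_pos[of m] by (simp add: divide_right_mono flip: add_divide_distrib)
    then show ?thesis using Mx[of m] My[of m] scale_pos[of m] by simp
  qed
  then show ?thesis unfolding bounded_iff real_norm_def by blast
qed

lemma pdist_eqI: "((\<lambda>m. d (x m) (y m) / s m) \<longlongrightarrow> a) U \<Longrightarrow> pdist x y = a"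
  unfolding cone_pdist_def ulim_def by (rule tendsto_Lim[OF U_proper])

lemma pdist_tendsto:
  assumes "x \<in> seqs" "y \<in> seqs"
  shows "((\<lambda>m. d (x m) (y m) / s m) \<longlongrightarrow> pdist x y) U"
  using nonprincipal_ultrafilter_convergent[OF U_ultra ratio_bounded[OF assms]] pdist_eqI by blast

lemma pdist_self: "x \<in> seqs \<Longrightarrow> pdist x x = 0"
  by (rule pdist_eqI) (simp add: seqs_in)

lemma seqsI:
  assumes "\<And>m. x m \<in> X" and "\<And>m. \<bar>d (x m) (b m) / s m\<bar> \<le> B"
  shows "x \<in> seqs"
proof -
  have "bounded (range (\<lambda>m. d (x m) (b m) / s m))"
    using assms(2) by (intro boundedI[where B = B]) auto
  then show ?thesis unfolding cone_seqs_def using assms(1) by blast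
qed

lemma pdist_eq_if_error:
  assumes "\<And>m. \<bar>d (x m) (y m) / s m - a\<bar> \<le> e m" and "(e \<longlongrightarrow> 0) sequentially"
  shows "pdist x y = a"
proof -
  have "\<forall>m. norm (d (x m) (y m) / s m - a) \<le> e m" using assms(1) by simp
  then have "((\<lambda>m. d (x m) (y m) / s m - a) \<longlongrightarrow> 0) sequentially"
    by (rule Lim_null_comparison[OF always_eventually assms(2)])
  then show ?thesis
    by (intro pdist_eqI tendsto_mono[OF U_le_sequentially]) (rule LIM_zero_cancel)
qed

lemma pdist_congr:
  assumes x: "x \<in> seqs" "x' \<in> seqs" and y: "y \<in> seqs" "y' \<in> seqs"
    and "pdist x x' = 0" "pdist y y' = 0"
  shows "pdist x' y' = pdist x y"
proof -
  let ?e = "\<lambda>m. d (x m) (x' m) / s m + d (y m) (y' m) / s m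
    - \<bar>d (x' m) (y' m) / s m - d (x m) (y m) / s m\<bar>"
  have "((\<lambda>m. d (x m) (x' m) / s m) \<longlongrightarrow> 0) U" "((\<lambda>m. d (y m) (y' m) / s m) \<longlongrightarrow> 0) U"
    using pdist_tendsto[OF x] pdist_tendsto[OF y] assms(5,6) by simp_all
  moreover have "((\<lambda>m. \<bar>d (x' m) (y' m) / s m - d (x m) (y m) / s m\<bar>) \<longlongrightarrow> \<bar>pdist x' y' - pdist x y\<bar>) U"
    using x y by (intro tendsto_rabs tendsto_diff pdist_tendsto)
  ultimately have "(?e \<longlongrightarrow> 0 + 0 - \<bar>pdist x' y' - pdist x y\<bar>) U"
    by (intro tendsto_diff tendsto_add)
  moreover have "0 \<le> ?e m" for m
  proof -
    have "\<bar>d (x' m) (y' m) - d (x m) (y m)\<bar> \<le> d (x m) (x' m) + d (y m) (y' m)"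
      using mdist_diff_le seqs_in x y by blast
    then have "\<bar>d (x' m) (y' m) - d (x m) (y m)\<bar> / s m \<le> (d (x m) (x' m) + d (y m) (y' m)) / s m"
      using scale_pos[of m] by (intro divide_right_mono) auto
    moreover have "\<bar>d (x' m) (y' m) / s m - d (x m) (y m) / s m\<bar>
        = \<bar>d (x' m) (y' m) - d (x m) (y m)\<bar> / s m"
      by (metis abs_div_pos diff_divide_distrib scale_pos)
    ultimately show ?thesis by (simp add: add_divide_distrib)
  qed
  ultimately have "0 \<le> 0 + 0 - \<bar>pdist x' y' - pdist x y\<bar>"
    using U_proper by (intro tendsto_lowerbound) (auto simp: always_eventually)
  then show ?thesis by simp
qed

lemma class_in_cone: "x \<in> seqs \<Longrightarrow> rel `` {x} \<in> asymptotic_cone X d U b s"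
  unfolding asymptotic_cone_def by (rule quotientI)

lemma cone_elem: "A \<in> asymptotic_cone X d U b s \<Longrightarrow> \<exists>x\<in>seqs. A = rel `` {x}"
  unfolding asymptotic_cone_def by (erule quotientE) blast

lemma cone_dist_class:
  assumes x: "x \<in> seqs" and y: "y \<in> seqs"
  shows "cone_dist d U s (rel `` {x}) (rel `` {y}) = pdist x y"
proof -
  have "x \<in> rel `` {x}" "y \<in> rel `` {y}"
    using x y pdist_self unfolding cone_rel_def by auto
  then have "(SOME z. z \<in> rel `` {x}) \<in> rel `` {x}" "(SOME z. z \<in> rel `` {y}) \<in> rel `` {y}"
    by (metis someI)+
  then show ?thesis
    unfolding cone_dist_def cone_rel_def using pdist_congr[OF x _ y] by auto
qed

lemma cone_contains_unit_circleI:
  assumes "\<And>t. t \<in> circle_pts 1 \<Longrightarrow> x t \<in> seqs"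
    and "\<And>t t'. t \<in> circle_pts 1 \<Longrightarrow> t' \<in> circle_pts 1 \<Longrightarrow> pdist (x t) (x t') = circle_dist 1 t t'"
  shows "cone_contains_unit_circle X d"
  unfolding cone_contains_unit_circle_def
proof (intro exI conjI)
  show "asymptotic_cone_data X U b s" by (rule data)
  show "(\<lambda>t. rel `` {x t}) ` circle_pts 1 \<subseteq> asymptotic_cone X d U b s"
    using assms(1) class_in_cone by auto
  show "\<forall>p\<in>circle_pts 1. \<forall>q\<in>circle_pts 1. cone_dist d U s (rel `` {x p}) (rel `` {x q}) = circle_dist 1 p q"
    using assms cone_dist_class by auto
qed

lemma eventually_sample_bilipschitz:
  assumes "finite I" and x: "\<And>i. i \<in> I \<Longrightarrow> x i \<in> seqs" and K: "1 < K"
    and pos: "\<And>i j. i \<in> I \<Longrightarrow> j \<in> I \<Longrightarrow> i \<noteq> j \<Longrightarrow> 0 < pdist (x i) (x j)"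
  shows "eventually (\<lambda>m. \<forall>i\<in>I. \<forall>j\<in>I. s m * pdist (x i) (x j) / K \<le> d (x i m) (x j m)
    \<and> d (x i m) (x j m) \<le> K * (s m * pdist (x i) (x j))) U"
proof (intro eventually_ball_finite ballI assms(1))
  fix i j assume i: "i \<in> I" and j: "j \<in> I"
  show "eventually (\<lambda>m. s m * pdist (x i) (x j) / K \<le> d (x i m) (x j m)
    \<and> d (x i m) (x j m) \<le> K * (s m * pdist (x i) (x j))) U"
  proof (cases "i = j")
    case True
    then show ?thesis using x[OF i] by (simp add: pdist_self seqs_in)
  next
    case False
    let ?p = "pdist (x i) (x j)"
    have "?p / K < ?p" "?p < K * ?p"
      using pos[OF i j False] K by (simp_all add: divide_less_eq)
    then have "eventually (\<lambda>m. ?p / K < d (x i m) (x j m) / s m) U"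
      "eventually (\<lambda>m. d (x i m) (x j m) / s m < K * ?p) U"
      using pdist_tendsto[OF x[OF i] x[OF j]] by (auto dest: order_tendstoD)
    then show ?thesis
    proof eventually_elim
      case (elim m)
      then show ?case
        using scale_pos[of m] by (simp add: field_simps)
    qed
  qed
qed

end

lemma (in cone_setting) cone_circle_sample:
  assumes f_in: "f ` circle_pts 1 \<subseteq> asymptotic_cone X d U b s"
    and f_iso: "\<forall>p\<in>circle_pts 1. \<forall>q\<in>circle_pts 1. cone_dist d U s (f p) (f q) = circle_dist 1 p q"
    and n: "1 \<le> n"
  obtains x where "\<And>i. i < n \<Longrightarrow> x i \<in> seqs"
    and "\<And>i j. i < n \<Longrightarrow> j < n \<Longrightarrow> pdist (x i) (x j) = scaled_cycle_dist (1 / real n) n i j"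
proof -
  define t where "t i = real i * (1 / real n)" for i
  have t_in: "t i \<in> circle_pts 1" if "i < n" for i
    using cycle_vertices_in_circle[OF _ that, of "1 / real n"] n by (simp add: t_def)
  have "\<forall>i\<in>{..<n}. \<exists>y\<in>seqs. f (t i) = rel `` {y}"
    using f_in t_in cone_elem by blast
  then obtain x where x: "\<And>i. i < n \<Longrightarrow> x i \<in> seqs" "\<And>i. i < n \<Longrightarrow> f (t i) = rel `` {x i}"
    by (metis lessThan_iff)
  have "pdist (x i) (x j) = scaled_cycle_dist (1 / real n) n i j" if "i < n" "j < n" for i j
  proof -
    have "pdist (x i) (x j) = cone_dist d U s (f (t i)) (f (t j))"
      using cone_dist_class[OF x(1)[OF that(1)] x(1)[OF that(2)]] x(2) that by simp
    also have "\<dots> = circle_dist 1 (t i) (t j)"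
      using f_iso t_in that by blast
    also have "\<dots> = scaled_cycle_dist (1 / real n) n i j"
      using circle_dist_cycle_vertices[of "1 / real n" n i j] n by (simp add: t_def)
    finally show ?thesis .
  qed
  with x(1) show ?thesis by (rule that)
qed

lemma approximates_ngons_if_cone_contains_unit_circle:
  assumes X: "Metric_space X d" and "cone_contains_unit_circle X d"
  shows "approximates_ngons X d"
proof -
  obtain U b s f where data: "asymptotic_cone_data X U b s"
    and f_in: "f ` circle_pts 1 \<subseteq> asymptotic_cone X d U b s"
    and f_iso: "\<forall>p\<in>circle_pts 1. \<forall>q\<in>circle_pts 1. cone_dist d U s (f p) (f q) = circle_dist 1 p q"
    using assms(2) unfolding cone_contains_unit_circle_def by blast
  interpret cone_setting X d U b s
    by (intro cone_setting.intro cone_setting_axioms.intro X data)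
  show ?thesis unfolding approximates_ngons_def
  proof (intro allI impI)
    fix K :: real and n :: nat and \<Lambda> :: real
    assume K: "1 < K" and n: "1 \<le> n"
    obtain x where x: "\<And>i. i < n \<Longrightarrow> x i \<in> seqs"
      and px: "\<And>i j. i < n \<Longrightarrow> j < n \<Longrightarrow> pdist (x i) (x j) = scaled_cycle_dist (1 / real n) n i j"
      using cone_circle_sample[OF f_in f_iso n] by blast
    have "eventually (\<lambda>m. \<forall>i\<in>{..<n}. \<forall>j\<in>{..<n}. s m * pdist (x i) (x j) / K \<le> d (x i m) (x j m)
        \<and> d (x i m) (x j m) \<le> K * (s m * pdist (x i) (x j))) U"
    proof (intro eventually_sample_bilipschitz x K)
      fix i j assume "i \<in> {..<n}" "j \<in> {..<n}" "i \<noteq> j"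
      then show "0 < pdist (x i) (x j)"
        using px circle_dist_distinct_vertices[of i n j] n
        by (simp add: scaled_cycle_dist_eq_circle_dist)
    qed auto
    moreover have "eventually (\<lambda>m. real n * \<Lambda> < s m) U"
      using scale_at_top U_le_sequentially unfolding filterlim_at_top_dense le_filter_def by blast
    ultimately obtain m where m: "\<forall>i\<in>{..<n}. \<forall>j\<in>{..<n}. s m * pdist (x i) (x j) / K \<le> d (x i m) (x j m)
        \<and> d (x i m) (x j m) \<le> K * (s m * pdist (x i) (x j))" "real n * \<Lambda> < s m"
      using eventually_happens'[OF U_proper eventually_conj] by blast
    define lam where "lam = s m / real n"
    have "scaled_cycle_dist lam n i j = s m * scaled_cycle_dist (1 / real n) n i j" for i j
      by (simp add: lam_def scaled_cycle_dist_def)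
    then have "bilipschitz_embedding (cycle_verts n) (scaled_cycle_dist lam n) X d K (\<lambda>i. x i m)"
      using m(1) px x seqs_in unfolding bilipschitz_embedding_def cycle_verts_def by auto
    moreover have "\<Lambda> < lam"
      using m(2) n by (simp add: lam_def field_simps)
    ultimately show "\<exists>lam>\<Lambda>. \<exists>f. bilipschitz_embedding (cycle_verts n) (scaled_cycle_dist lam n) X d K f"
      by blast
  qed
qed

lemma almost_isometric_dist_lower:
  assumes X: "Metric_space X d" and circ: "R_circle X d R c \<alpha>" and iso: "almost_isometric d K c \<alpha>"
    and p: "p \<in> circle_pts c" and q: "q \<in> circle_pts c"
  shows "circle_dist c p q + 1 / K * (c / 2) - c / 2 - R \<le> d (\<alpha> p) (\<alpha> q)"
proof -
  have in_X: "\<alpha> ` circle_pts c \<subseteq> X"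
    and up: "\<And>p q. p \<in> circle_pts c \<Longrightarrow> q \<in> circle_pts c \<Longrightarrow> d (\<alpha> p) (\<alpha> q) \<le> circle_dist c p q + R"
    using circ unfolding R_circle_def by auto
  define q' where "q' = (if q < c / 2 then q + c / 2 else q - c / 2)"
  have "0 \<le> p" "p < c" "0 \<le> q" "q < c" using p q by (auto simp: circle_pts_def)
  note antipode = circle_antipode[OF this, folded q'_def]
  have "1 / K * (c / 2) \<le> d (\<alpha> q) (\<alpha> q')"
    using iso q antipode(1,2) unfolding almost_isometric_def by blast
  also have "\<dots> \<le> d (\<alpha> p) (\<alpha> q) + d (\<alpha> p) (\<alpha> q')"
    using Metric_space.triangle''[OF X] in_X p q antipode(1) by blast
  also have "\<dots> \<le> d (\<alpha> p) (\<alpha> q) + (c / 2 - circle_dist c p q + R)"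
    using up[OF p antipode(1)] antipode(3) by simp
  finally show ?thesis by simp
qed

lemma almost_isometric_rescaled_dist:
  assumes X: "Metric_space X d" and circ: "R_circle X d R c \<alpha>" and iso: "almost_isometric d K c \<alpha>"
    and K: "1 \<le> K" and t: "t \<in> circle_pts 1" and t': "t' \<in> circle_pts 1"
  shows "\<bar>d (\<alpha> (t * c)) (\<alpha> (t' * c)) / c - circle_dist 1 t t'\<bar> \<le> (1 - 1 / K) / 2 + R / c"
proof -
  have c: "0 < c" using circ by (simp add: R_circle_def)
  have pts: "t * c \<in> circle_pts c" "t' * c \<in> circle_pts c"
    using t t' c by (auto simp: circle_pts_def)
  have cd: "circle_dist c (t * c) (t' * c) = c * circle_dist 1 t t'"
    using circle_dist_mult[of c 1 t t'] c by (simp add: mult.commute)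
  let ?D = "d (\<alpha> (t * c)) (\<alpha> (t' * c))" and ?cd = "circle_dist 1 t t'"
  have "?D \<le> c * ?cd + R"
    using circ pts cd unfolding R_circle_def by (metis (no_types, lifting))
  then have "?D / c \<le> (c * ?cd + R) / c"
    using c by (simp add: divide_right_mono)
  moreover have "(c * ?cd + R) / c = ?cd + R / c"
    using c by (simp add: field_simps)
  moreover have "c * ?cd + 1 / K * (c / 2) - c / 2 - R \<le> ?D"
    using almost_isometric_dist_lower[OF X circ iso pts] cd by simp
  then have "(c * ?cd + 1 / K * (c / 2) - c / 2 - R) / c \<le> ?D / c"
    using c by (simp add: divide_right_mono)
  moreover have "(c * ?cd + 1 / K * (c / 2) - c / 2 - R) / c = ?cd - (1 - 1 / K) / 2 - R / c"
    using c by (simp add: field_simps)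
  moreover have "0 \<le> (1 - 1 / K) / 2" using K by simp
  ultimately have "?D / c - ?cd \<le> (1 - 1 / K) / 2 + R / c" "?cd - ?D / c \<le> (1 - 1 / K) / 2 + R / c"
    by linarith+
  then show ?thesis by (simp add: abs_le_iff)
qed

lemma not_strongly_shortcut_circle_sequence:
  assumes "\<not> strongly_shortcut X d R" and K: "\<And>m. 1 < K m"
  obtains c \<alpha> where "\<And>m. R_circle X d R (c m) (\<alpha> m)" "\<And>m. almost_isometric d (K m) (c m) (\<alpha> m)"
    "\<And>m. real m + 1 < c m"
proof -
  have "\<forall>m. \<exists>p. R_circle X d R (fst p) (snd p) \<and> almost_isometric d (K m) (fst p) (snd p)
      \<and> real m + 1 < fst p"
  proof
    fix m
    obtain c \<alpha> where "R_circle X d R c \<alpha> \<and> almost_isometric d (K m) c \<alpha> \<and> real m + 1 < c"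
      using assms(1) K[of m] unfolding strongly_shortcut_def by (meson not_le)
    then show "\<exists>p. R_circle X d R (fst p) (snd p) \<and> almost_isometric d (K m) (fst p) (snd p)
      \<and> real m + 1 < fst p"
      by (intro exI[of _ "(c, \<alpha>)"]) simp
  qed
  from choice[OF this] obtain p where "\<forall>m. R_circle X d R (fst (p m)) (snd (p m)) \<and>
      almost_isometric d (K m) (fst (p m)) (snd (p m)) \<and> real m + 1 < fst (p m)" ..
  then show ?thesis by (intro that[of "\<lambda>m. fst (p m)" "\<lambda>m. snd (p m)"]) auto
qed

lemma cone_contains_unit_circle_if_rescaled_circles_converge:
  assumes X: "Metric_space X d" and in_X: "\<And>m. \<alpha> m ` circle_pts (c m) \<subseteq> X"
    and long: "\<And>m. real m + 1 < c m" and "0 \<le> E"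
    and err: "\<And>t t' m. t \<in> circle_pts 1 \<Longrightarrow> t' \<in> circle_pts 1 \<Longrightarrow>
      \<bar>d (\<alpha> m (t * c m)) (\<alpha> m (t' * c m)) / c m - circle_dist 1 t t'\<bar> \<le> E / (real m + 1)"
  shows "cone_contains_unit_circle X d"
proof -
  obtain U where U: "nonprincipal_ultrafilter U"
    using exists_nonprincipal_ultrafilter by blast
  define x where "x t m = \<alpha> m (t * c m)" for t m
  have x_in: "x t m \<in> X" if "t \<in> circle_pts 1" for t m
  proof -
    have "t * c m \<in> circle_pts (c m)"
      using that long[of m] by (auto simp: circle_pts_def)
    then show ?thesis using in_X[of m] unfolding x_def by blast
  qed
  have zero_in: "0 \<in> circle_pts 1" by (simp add: circle_pts_def)
  have "asymptotic_cone_data X U (x 0) c"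
    unfolding asymptotic_cone_data_def
  proof (intro conjI allI U x_in[OF zero_in])
    show "0 < c m" for m using long[of m] by linarith
    have "real m \<le> c m" for m using long[of m] by linarith
    then show "filterlim c at_top sequentially"
      by (intro filterlim_at_top_mono[OF filterlim_real_sequentially]) (simp add: always_eventually)
  qed
  then interpret cone_setting X d U "x 0" c
    by (intro cone_setting.intro cone_setting_axioms.intro X)
  have lim: "((\<lambda>m. E / (real m + 1)) \<longlongrightarrow> 0) sequentially"
    using LIMSEQ_Suc[OF lim_const_over_n[of E]] by (simp add: add.commute)
  show ?thesis
  proof (rule cone_contains_unit_circleI)
    fix t assume t: "t \<in> circle_pts 1"
    have "\<bar>d (x t m) (x 0 m) / c m\<bar> \<le> 1 + E" for m
    proof -
      have "d (x t m) (x 0 m) / c m - circle_dist 1 t 0 \<le> E / (real m + 1)"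
        using err[OF t zero_in, of m] unfolding x_def by (rule abs_le_D1)
      moreover have "circle_dist 1 t 0 \<le> 1"
        using t by (auto simp: circle_dist_def circle_pts_def)
      moreover have "E / (real m + 1) \<le> E"
        using divide_left_mono[of 1 "real m + 1" E] \<open>0 \<le> E\<close> by simp
      moreover have "0 \<le> d (x t m) (x 0 m) / c m"
        using long[of m] by simp
      ultimately show ?thesis by simp
    qed
    then show "x t \<in> seqs" by (rule seqsI[OF x_in[OF t]])
  next
    fix t t' assume t: "t \<in> circle_pts 1" and t': "t' \<in> circle_pts 1"
    show "pdist (x t) (x t') = circle_dist 1 t t'"
      by (rule pdist_eq_if_error[OF _ lim]) (unfold x_def, rule err[OF t t'])
  qed
qed

lemma cone_contains_unit_circle_if_not_strongly_shortcut:
  assumes X: "Metric_space X d" and R: "0 \<le> R" and "\<not> strongly_shortcut X d R"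
  shows "cone_contains_unit_circle X d"
proof -
  define K where "K m = (real m + 2) / (real m + 1)" for m :: nat
  have K: "1 < K m" "(1 - 1 / K m) / 2 \<le> 1 / (real m + 1)" for m
    by (simp_all add: K_def field_simps)
  obtain c \<alpha> where circ: "\<And>m. R_circle X d R (c m) (\<alpha> m)"
    and iso: "\<And>m. almost_isometric d (K m) (c m) (\<alpha> m)" and long: "\<And>m. real m + 1 < c m"
    using not_strongly_shortcut_circle_sequence[where K = K, OF assms(3) K(1)] by blast
  show ?thesis
  proof (rule cone_contains_unit_circle_if_rescaled_circles_converge[where \<alpha> = \<alpha>, OF X _ long])
    show "\<alpha> m ` circle_pts (c m) \<subseteq> X" for m using circ[of m] by (simp add: R_circle_def)
    show "0 \<le> 1 + R" using R by simp
    fix t t' m assume "t \<in> circle_pts 1" "t' \<in> circle_pts 1"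
    moreover have "R / c m \<le> R / (real m + 1)"
      using R long[of m] by (intro divide_left_mono) auto
    moreover have "(1 + R) / (real m + 1) = 1 / (real m + 1) + R / (real m + 1)"
      by (simp add: add_divide_distrib)
    ultimately show "\<bar>d (\<alpha> m (t * c m)) (\<alpha> m (t' * c m)) / c m - circle_dist 1 t t'\<bar> \<le> (1 + R) / (real m + 1)"
      using almost_isometric_rescaled_dist[OF X circ iso less_imp_le[OF K(1)], of t t' m] K(2)[of m]
      by linarith
  qed
qed

section \<open>Rough-geodesic polygons through an \<open>n\<close>-gon\<close>

lemma rough_geodesicD:
  assumes "rough_geodesic X d R x y g"
  shows "g 0 = x" "g (d x y) = y" "a \<in> {0..d x y} \<Longrightarrow> g a \<in> X"
    and "a \<in> {0..d x y} \<Longrightarrow> b \<in> {0..d x y} \<Longrightarrow> d (g a) (g b) \<le> \<bar>a - b\<bar> + R"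
    and "a \<in> {0..d x y} \<Longrightarrow> b \<in> {0..d x y} \<Longrightarrow> \<bar>a - b\<bar> - R \<le> d (g a) (g b)"
  using assms unfolding rough_geodesic_def rough_isometric_embedding_def by auto

lemma rough_geodesic_some:
  assumes "rough_geodesic_space X d R" "x \<in> X" "y \<in> X"
  shows "rough_geodesic X d R x y (SOME g. rough_geodesic X d R x y g)"
proof -
  have "\<exists>g. rough_geodesic X d R x y g"
    using assms unfolding rough_geodesic_space_def by blast
  then show ?thesis by (rule someI_ex)
qed

lemma nat_floor_divide_bounds:
  fixes E t :: real
  assumes "0 < E" "0 \<le> t"
  shows "real (nat \<lfloor>t / E\<rfloor>) * E \<le> t" "t < real (nat \<lfloor>t / E\<rfloor>) * E + E"
  using floor_divide_lower[of E t] floor_divide_upper[of E t] assms by (simp_all add: algebra_simps)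

lemma nat_floor_divide_eq:
  fixes E s :: real
  assumes "0 < E" "0 \<le> s" "s < E"
  shows "nat \<lfloor>(real k * E + s) / E\<rfloor> = k"
proof -
  have "(real k * E + s) / E = real k + s / E" using assms by (simp add: field_simps)
  moreover have "0 \<le> s / E" "s / E < 1" using assms by auto
  ultimately have "\<lfloor>(real k * E + s) / E\<rfloor> = int k" by (simp add: floor_unique)
  then show ?thesis by simp
qed

locale rough_ngon = Metric_space X d for X :: "'a set" and d +
  fixes R lam K :: real and n :: nat and f :: "nat \<Rightarrow> 'a"
  assumes R_nonneg: "0 \<le> R" and rough_geodesic: "rough_geodesic_space X d R"
    and K_gt_1: "1 < K" and lam_pos: "0 < lam" and n_ge_2: "2 \<le> n"
    and bilipschitz: "bilipschitz_embedding (cycle_verts n) (scaled_cycle_dist lam n) X d K f"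
begin

definition vert :: "nat \<Rightarrow> 'a" where "vert i = f (i mod n)"

lemma vert_in: "vert i \<in> X"
  using bilipschitz n_ge_2 unfolding bilipschitz_embedding_def vert_def cycle_verts_def by auto

lemma vert_add_n: "vert (k + n) = vert k"
  unfolding vert_def by simp

lemma vert_dist_bounds:
  shows "lam * cyclic_dist n i j / K \<le> d (vert i) (vert j)"
    and "d (vert i) (vert j) \<le> K * (lam * cyclic_dist n i j)"
proof -
  have "i mod n \<in> cycle_verts n" "j mod n \<in> cycle_verts n"
    using n_ge_2 by (auto simp: cycle_verts_def)
  then show "lam * cyclic_dist n i j / K \<le> d (vert i) (vert j)"
    and "d (vert i) (vert j) \<le> K * (lam * cyclic_dist n i j)"
    using bilipschitz
    unfolding bilipschitz_embedding_def vert_def cyclic_dist_def scaled_cycle_dist_eq_circle_dist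
    by auto
qed

lemma vert_dist_Suc: "d (vert k) (vert (Suc k)) \<le> K * lam"
  using vert_dist_bounds(2)[of k "Suc k"] cyclic_dist_Suc[OF n_ge_2] by simp

lemma vert_dist_add: "d (vert a) (vert (a + q)) \<le> real q * (K * lam)"
proof (induction q)
  case 0
  then show ?case using vert_in by simp
next
  case (Suc q)
  have "d (vert a) (vert (a + Suc q)) \<le> d (vert a) (vert (a + q)) + d (vert (a + q)) (vert (Suc (a + q)))"
    using triangle[OF vert_in vert_in vert_in] by simp
  then show ?case using Suc vert_dist_Suc[of "a + q"] by (simp add: algebra_simps)
qed

definition side_len :: "nat \<Rightarrow> real" where "side_len k = d (vert k) (vert (Suc k))"

definition side :: "nat \<Rightarrow> real \<Rightarrow> 'a" where
  "side k = (SOME g. rough_geodesic X d R (vert k) (vert (Suc k)) g)"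

lemma side_rough_geodesic: "rough_geodesic X d R (vert k) (vert (Suc k)) (side k)"
  unfolding side_def by (rule rough_geodesic_some[OF rough_geodesic vert_in vert_in])

lemma side_start: "side k 0 = vert k"
  and side_end: "side k (side_len k) = vert (Suc k)"
  and side_in: "a \<in> {0..side_len k} \<Longrightarrow> side k a \<in> X"
  and side_dist_le: "a \<in> {0..side_len k} \<Longrightarrow> b \<in> {0..side_len k} \<Longrightarrow>
    d (side k a) (side k b) \<le> \<bar>a - b\<bar> + R"
  and side_dist_ge: "a \<in> {0..side_len k} \<Longrightarrow> b \<in> {0..side_len k} \<Longrightarrow>
    \<bar>a - b\<bar> - R \<le> d (side k a) (side k b)"
  using rough_geodesicD[OF side_rough_geodesic[of k]] unfolding side_len_def by auto

lemma side_len_nonneg: "0 \<le> side_len k"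
  by (simp add: side_len_def)

lemma side_len_le: "side_len k \<le> K * lam"
  using vert_dist_Suc by (simp add: side_len_def)

lemma side_add_n: "side (k + n) = side k"
  unfolding side_def using vert_add_n[of k] vert_add_n[of "Suc k"] by simp

lemma side_len_add_n: "side_len (k + n) = side_len k"
  unfolding side_len_def using vert_add_n[of k] vert_add_n[of "Suc k"] by simp

text \<open>The loop spends parameter time \<open>seg\<close> on each side: it runs along the side at speed
  at most 1 and then rests at the next vertex for time \<open>R\<close>, which absorbs the additive
  error of the rough geodesic.\<close>

definition seg :: real where "seg = K * lam + R"

definition side_param :: "nat \<Rightarrow> real \<Rightarrow> real" where
  "side_param k s = side_len k * min (s / (K * lam)) 1"

definition side_pt :: "nat \<Rightarrow> real \<Rightarrow> 'a" where
  "side_pt k s = side k (side_param k s)"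

definition loop_side :: "real \<Rightarrow> nat" where "loop_side t = nat \<lfloor>t / seg\<rfloor>"

definition loop_offset :: "real \<Rightarrow> real" where "loop_offset t = t - real (loop_side t) * seg"

definition loop :: "real \<Rightarrow> 'a" where "loop t = side_pt (loop_side t) (loop_offset t)"

definition loop_len :: real where "loop_len = real n * seg"

lemma Klam_pos: "0 < K * lam"
  using K_gt_1 lam_pos by simp

lemma seg_pos: "0 < seg"
  using Klam_pos R_nonneg by (simp add: seg_def)

lemma loop_len_pos: "0 < loop_len"
  using seg_pos n_ge_2 by (simp add: loop_len_def)

lemma loop_offset_bounds: "0 \<le> t \<Longrightarrow> 0 \<le> loop_offset t \<and> loop_offset t < seg"
  using nat_floor_divide_bounds[OF seg_pos] unfolding loop_offset_def loop_side_def
  by (simp add: algebra_simps)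

lemma loop_side_eq: "0 \<le> s \<Longrightarrow> s < seg \<Longrightarrow> loop_side (real k * seg + s) = k"
  unfolding loop_side_def by (rule nat_floor_divide_eq[OF seg_pos])

lemma loop_eq: "0 \<le> s \<Longrightarrow> s < seg \<Longrightarrow> loop (real k * seg + s) = side_pt k s"
  unfolding loop_def loop_offset_def by (simp add: loop_side_eq)

lemma loop_decomp:
  assumes "0 \<le> t"
  obtains k s where "0 \<le> s" "s < seg" "t = real k * seg + s"
proof -
  have "t = real (loop_side t) * seg + loop_offset t" by (simp add: loop_offset_def)
  then show ?thesis using that loop_offset_bounds[OF assms] by blast
qed

lemma side_param_bounds:
  assumes "0 \<le> s"
  shows "0 \<le> side_param k s" "side_param k s \<le> side_len k" "side_param k s \<le> s"
proof -
  have m: "0 \<le> min (s / (K * lam)) 1" "min (s / (K * lam)) 1 \<le> 1"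
    using assms Klam_pos by auto
  then show "0 \<le> side_param k s" "side_param k s \<le> side_len k"
    unfolding side_param_def using side_len_nonneg[of k] mult_left_mono[OF m(2)] by auto
  have "side_param k s \<le> K * lam * min (s / (K * lam)) 1"
    unfolding side_param_def using mult_right_mono[OF side_len_le m(1)] .
  also have "\<dots> \<le> K * lam * (s / (K * lam))"
    using Klam_pos by (intro mult_left_mono) auto
  finally show "side_param k s \<le> s" using K_gt_1 lam_pos by simp
qed

lemma side_param_in: "0 \<le> s \<Longrightarrow> side_param k s \<in> {0..side_len k}"
  using side_param_bounds by auto

lemma side_param_mono_lipschitz:
  assumes "0 \<le> s" "s \<le> s'"
  shows "side_param k s \<le> side_param k s'" "side_param k s' - side_param k s \<le> s' - s"
proof -
  have m: "min (s / (K * lam)) 1 \<le> min (s' / (K * lam)) 1"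
    "min (s' / (K * lam)) 1 - min (s / (K * lam)) 1 \<le> (s' - s) / (K * lam)"
    using assms Klam_pos by (auto simp: min_def diff_divide_distrib divide_right_mono)
  then show "side_param k s \<le> side_param k s'"
    unfolding side_param_def by (intro mult_left_mono side_len_nonneg)
  have "side_len k * (min (s' / (K * lam)) 1 - min (s / (K * lam)) 1) \<le> K * lam * ((s' - s) / (K * lam))"
    using m side_len_le side_len_nonneg Klam_pos by (intro mult_mono) auto
  also have "\<dots> = s' - s"
    using K_gt_1 lam_pos by simp
  finally show "side_param k s' - side_param k s \<le> s' - s"
    unfolding side_param_def by (simp add: right_diff_distrib)
qed

lemma side_pt_in: "0 \<le> s \<Longrightarrow> side_pt k s \<in> X"
  unfolding side_pt_def using side_in side_param_in by blast

lemma side_pt_add_n: "side_pt (k + n) = side_pt k"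
  unfolding side_pt_def[abs_def] side_param_def[abs_def] side_add_n side_len_add_n ..

lemma side_pt_dist_next:
  assumes "0 \<le> s" "s < seg"
  shows "d (side_pt k s) (vert (Suc k)) \<le> seg - s"
proof (cases "s \<le> K * lam")
  case True
  have "side_param k (K * lam) = side_len k"
    using K_gt_1 lam_pos by (simp add: side_param_def)
  then have "side_len k - side_param k s \<le> K * lam - s"
    using side_param_mono_lipschitz(2)[OF assms(1) True, of k] by simp
  moreover have "d (side_pt k s) (vert (Suc k)) \<le> side_len k - side_param k s + R"
    using side_dist_le[of "side_param k s" k "side_len k"] side_param_in[OF assms(1)]
      side_param_bounds[OF assms(1)]
    unfolding side_pt_def side_end by (simp add: side_len_nonneg)
  ultimately show ?thesis by (simp add: seg_def)
next
  case False
  then have "side_pt k s = vert (Suc k)"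
    using K_gt_1 lam_pos by (simp add: side_pt_def side_param_def side_end)
  then show ?thesis using assms vert_in by simp
qed

lemma side_pt_dist_start:
  assumes "0 \<le> s"
  shows "d (vert k) (side_pt k s) \<le> s + R" "d (vert k) (side_pt k s) \<le> seg"
proof -
  have "d (vert k) (side_pt k s) \<le> side_param k s + R"
    using side_dist_le[of 0 k "side_param k s"] side_param_bounds[OF assms]
    unfolding side_pt_def side_start by (simp add: side_len_nonneg)
  then show "d (vert k) (side_pt k s) \<le> s + R" "d (vert k) (side_pt k s) \<le> seg"
    using side_param_bounds[OF assms, of k] side_len_le[of k] unfolding seg_def by linarith+
qed

lemma side_pt_dist_same_side:
  assumes "0 \<le> s" "s \<le> s'"
  shows "d (side_pt k s) (side_pt k s') \<le> s' - s + R"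
proof -
  have "d (side_pt k s) (side_pt k s') \<le> \<bar>side_param k s - side_param k s'\<bar> + R"
    unfolding side_pt_def using assms by (intro side_dist_le side_param_in) auto
  then show ?thesis using side_param_mono_lipschitz[OF assms, of k] by simp
qed

lemma side_pt_dist_later_side:
  assumes "0 \<le> s" "s < seg" "0 \<le> s'"
  shows "d (side_pt k s) (side_pt (Suc k + q) s') \<le> (seg - s) + real q * seg + s' + R"
proof -
  have "d (vert (Suc k)) (vert (Suc k + q)) \<le> real q * seg"
    using vert_dist_add[of "Suc k" q] R_nonneg by (simp add: seg_def mult_left_mono order_trans)
  have "d (side_pt k s) (side_pt (Suc k + q) s')
      \<le> d (side_pt k s) (vert (Suc k)) + d (vert (Suc k)) (side_pt (Suc k + q) s')"
    using triangle side_pt_in vert_in assms by blast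
  also have "\<dots> \<le> d (side_pt k s) (vert (Suc k))
      + (d (vert (Suc k)) (vert (Suc k + q)) + d (vert (Suc k + q)) (side_pt (Suc k + q) s'))"
    using triangle side_pt_in vert_in assms by (meson add_left_mono)
  also have "\<dots> \<le> (seg - s) + (real q * seg + (s' + R))"
    using side_pt_dist_next[OF assms(1,2)] \<open>d (vert (Suc k)) (vert (Suc k + q)) \<le> real q * seg\<close>
      side_pt_dist_start(1)[OF assms(3)]
    by (intro add_mono)
  finally show ?thesis by simp
qed

lemma loop_in: "0 \<le> t \<Longrightarrow> loop t \<in> X"
  unfolding loop_def using side_pt_in loop_offset_bounds by blast

lemma loop_add_len:
  assumes "0 \<le> t"
  shows "loop (t + loop_len) = loop t"
proof -
  obtain k s where s: "0 \<le> s" "s < seg" "t = real k * seg + s"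
    using loop_decomp[OF assms] .
  have "loop (t + loop_len) = loop (real (k + n) * seg + s)"
    using s by (simp add: loop_len_def algebra_simps)
  also have "\<dots> = side_pt k s"
    using loop_eq[OF s(1,2), of "k + n"] side_pt_add_n by simp
  also have "\<dots> = loop t"
    using loop_eq[OF s(1,2)] s(3) by simp
  finally show ?thesis .
qed

lemma loop_dist_le:
  assumes "0 \<le> t" "t \<le> t'"
  shows "d (loop t) (loop t') \<le> t' - t + R"
proof -
  obtain k s where s: "0 \<le> s" "s < seg" "t = real k * seg + s"
    using loop_decomp[OF assms(1)] .
  have "0 \<le> t'" using assms by linarith
  then obtain j s' where s': "0 \<le> s'" "s' < seg" "t' = real j * seg + s'"
    by (rule loop_decomp)
  have "real k * seg < (real j + 1) * seg"
    using s s' assms by (simp add: algebra_simps)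
  then have "k \<le> j" using seg_pos by (simp add: mult_less_cancel_right_pos)
  have loops: "loop t = side_pt k s" "loop t' = side_pt j s'"
    using loop_eq[OF s(1,2), of k] loop_eq[OF s'(1,2), of j] s(3) s'(3) by simp_all
  show ?thesis
  proof (cases "k = j")
    case True
    then show ?thesis
      using s s' assms side_pt_dist_same_side[of s s' k] unfolding loops by simp
  next
    case False
    then obtain q where j: "j = Suc k + q"
      using \<open>k \<le> j\<close> by (metis le_Suc_ex le_neq_implies_less Suc_le_eq)
    then have "t' - t = (seg - s) + real q * seg + s'"
      using s s' by (simp add: algebra_simps)
    then show ?thesis
      using side_pt_dist_later_side[OF s(1,2) s'(1), of k q] unfolding loops j by simp
  qed
qed

lemma loop_R_circle: "R_circle X d R loop_len loop"
  unfolding R_circle_def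
proof (intro conjI ballI)
  show "0 < loop_len" by (rule loop_len_pos)
  show "loop ` circle_pts loop_len \<subseteq> X" using loop_in by (auto simp: circle_pts_def)
  have both_ways: "d (loop p) (loop q) \<le> circle_dist loop_len p q + R"
    if "0 \<le> p" "p \<le> q" "q < loop_len" for p q
  proof -
    have "d (loop p) (loop q) \<le> q - p + R" using loop_dist_le[OF that(1,2)] .
    moreover have "d (loop q) (loop (p + loop_len)) \<le> loop_len + p - q + R"
      using loop_dist_le[of q "p + loop_len"] that by simp
    then have "d (loop p) (loop q) \<le> loop_len + p - q + R"
      using loop_add_len[OF that(1)] commute[of "loop p" "loop q"] that by simp
    ultimately show ?thesis using that unfolding circle_dist_def by (simp add: min_def)
  qed
  fix p q assume "p \<in> circle_pts loop_len" "q \<in> circle_pts loop_len"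
  then have "0 \<le> p" "p < loop_len" "0 \<le> q" "q < loop_len" by (auto simp: circle_pts_def)
  then show "d (loop p) (loop q) \<le> circle_dist loop_len p q + R"
    using both_ways[of p q] both_ways[of q p] commute[of "loop p" "loop q"] circle_dist_commute
    by (cases "p \<le> q") auto
qed

lemma loop_dist_half_turn:
  assumes "n = 2 * m" and "0 \<le> t"
  shows "lam * real m / K - 2 * seg \<le> d (loop t) (loop (t + real m * seg))"
proof -
  obtain k s where s: "0 \<le> s" "s < seg" "t = real k * seg + s"
    using loop_decomp[OF assms(2)] .
  have t_m: "t + real m * seg = real (k + m) * seg + s"
    using s by (simp add: algebra_simps)
  have loop_t': "loop (t + real m * seg) = side_pt (k + m) s"
    unfolding t_m by (rule loop_eq[OF s(1,2)])
  have loop_t: "loop t = side_pt k s"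
    using loop_eq[OF s(1,2)] s(3) by simp
  have "cyclic_dist n k (k + m) = real m"
    using cyclic_dist_add[of m n k] assms n_ge_2 by simp
  then have "lam * real m / K \<le> d (vert k) (vert (k + m))"
    using vert_dist_bounds(1)[of k "k + m"] by simp
  also have "\<dots> \<le> d (vert k) (side_pt k s) + d (side_pt k s) (vert (k + m))"
    using triangle side_pt_in vert_in s by blast
  also have "d (side_pt k s) (vert (k + m))
      \<le> d (side_pt k s) (side_pt (k + m) s) + d (side_pt (k + m) s) (vert (k + m))"
    using triangle side_pt_in vert_in s by blast
  also have "d (side_pt (k + m) s) (vert (k + m)) \<le> seg"
    using side_pt_dist_start(2)[OF s(1), of "k + m"] commute side_pt_in vert_in s by metis
  finally show ?thesis
    unfolding loop_t loop_t' using side_pt_dist_start(2)[OF s(1), of k] by simp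
qed

lemma half_turn_margin:
  assumes K': "K * K < K'" and m: "2 * K + 1 \<le> real m * (1 / K - K / K')"
    and lam: "R * (2 + real m) < lam"
  shows "1 / K' * (real m * seg) \<le> lam * real m / K - 2 * seg"
proof -
  have "1 < K'" using K' less_1_mult[OF K_gt_1 K_gt_1] by linarith
  then have "real m * R / K' \<le> real m * R"
    using R_nonneg by (simp add: divide_le_eq mult_le_cancel_left1 not_less)
  then have "lam * (2 * K + 1) - 2 * K * lam - 2 * R - real m * R
      \<le> lam * (real m * (1 / K - K / K')) - 2 * K * lam - 2 * R - real m * R / K'"
    using mult_left_mono[OF m, of lam] lam_pos by linarith
  also have "\<dots> = lam * real m / K - 2 * seg - 1 / K' * (real m * seg)"
    using K_gt_1 \<open>1 < K'\<close> unfolding seg_def by (simp add: field_simps)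
  finally show ?thesis
    using lam by (simp add: algebra_simps)
qed

lemma loop_almost_isometric:
  assumes n: "n = 2 * m" and K': "1 / K' * (real m * seg) \<le> lam * real m / K - 2 * seg"
  shows "almost_isometric d K' loop_len loop"
  unfolding almost_isometric_def
proof (intro ballI impI)
  fix p q assume "p \<in> circle_pts loop_len" "q \<in> circle_pts loop_len"
    and half: "circle_dist loop_len p q = loop_len / 2"
  then have pq: "0 \<le> p" "0 \<le> q" by (auto simp: circle_pts_def)
  have len: "loop_len / 2 = real m * seg" unfolding loop_len_def by (simp add: n)
  then have "\<bar>p - q\<bar> = real m * seg"
    using half unfolding circle_dist_def by (auto simp: min_def split: if_splits)
  have far: "1 / K' * (loop_len / 2) \<le> d (loop t) (loop (t + real m * seg))" if "0 \<le> t" for t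
    unfolding len using loop_dist_half_turn[OF n that] K' by linarith
  have "q = p + real m * seg \<or> p = q + real m * seg"
    using \<open>\<bar>p - q\<bar> = real m * seg\<close> by linarith
  then show "1 / K' * (loop_len / 2) \<le> d (loop p) (loop q)"
    using far[OF pq(1)] far[OF pq(2)] commute[of "loop p"] by auto
qed

end

lemma not_strongly_shortcut_if_approximates_ngons:
  assumes X: "Metric_space X d" and R: "0 \<le> R" and geo: "rough_geodesic_space X d R"
    and ngons: "approximates_ngons X d"
  shows "\<not> strongly_shortcut X d R"
  unfolding strongly_shortcut_def
proof (intro notI, elim exE conjE)
  fix K' B assume K': "1 < K'"
    and bound: "\<forall>c \<alpha>. R_circle X d R c \<alpha> \<and> almost_isometric d K' c \<alpha> \<longrightarrow> c \<le> B"
  define K where "K = sqrt (sqrt K')"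
  have K: "1 < K" "K * K < K'"
    using K' real_sqrt_less_iff[of K' "K' * K'"] by (auto simp: K_def real_sqrt_gt_1_iff)
  have "0 < 1 / K - K / K'"
    using K K' by (simp add: field_simps)
  obtain m :: nat where "(2 * K + 1) / (1 / K - K / K') \<le> real m"
    using real_arch_simple by blast
  then have m: "2 * K + 1 \<le> real m * (1 / K - K / K')"
    using \<open>0 < 1 / K - K / K'\<close> by (simp add: divide_le_eq)
  have "m \<noteq> 0"
  proof
    assume "m = 0"
    then show False using m K by simp
  qed
  then have "1 \<le> m" "1 \<le> 2 * m" by simp_all
  obtain lam f where lam: "max B (R * (2 + real m)) < lam"
    and f: "bilipschitz_embedding (cycle_verts (2 * m)) (scaled_cycle_dist lam (2 * m)) X d K f"
    using ngons K \<open>1 \<le> 2 * m\<close> unfolding approximates_ngons_def by blast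
  have "0 \<le> R * (2 + real m)" using R by simp
  then have "0 < lam" using lam by linarith
  interpret P: rough_ngon X d R lam K "2 * m" f
    using R geo K \<open>0 < lam\<close> \<open>1 \<le> m\<close> f
    by (intro rough_ngon.intro X rough_ngon_axioms.intro) auto
  have "R * (2 + real m) < lam" using lam by simp
  then have "P.loop_len \<le> B"
    using bound P.loop_R_circle P.loop_almost_isometric[OF refl P.half_turn_margin[OF K(2) m]] by blast
  moreover have "1 * (1 * lam + 0) \<le> real (2 * m) * (K * lam + R)"
    using \<open>1 \<le> 2 * m\<close> K R \<open>0 < lam\<close> by (intro mult_mono add_mono mult_right_mono) auto
  then have "lam \<le> P.loop_len"
    unfolding P.loop_len_def P.seg_def by simp
  ultimately show False using lam by simp
qed

section \<open>Cutting the corners of the polygon\<close>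

text \<open>At the corner \<open>vert (Suc k)\<close> the polygon is shortcut by a rough geodesic (the chord) from
  \<open>side k\<close> at parameter \<open>s\<close> to \<open>side (Suc k)\<close> at parameter \<open>t\<close>. The cut points nearly
  maximise the gain \<open>(side_len k - s) + t - L0 * d (side k s) (side (Suc k) t)\<close>; by this
  maximality, walking along a side and then along the chord is an \<open>(L0, 4 R)\<close>-quasi-geodesic.\<close>

locale cut_ngon = rough_ngon +
  fixes L0 :: real
  assumes L0_gt_1: "1 < L0" and n_ge_4: "4 \<le> n"
begin

definition cut_gain :: "nat \<Rightarrow> real \<Rightarrow> real \<Rightarrow> real" where
  "cut_gain k s t = (side_len k - s) + t - L0 * d (side k s) (side (Suc k) t)"

definition cut_box :: "nat \<Rightarrow> (real \<times> real) set" where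
  "cut_box k = {0..side_len k} \<times> {0..side_len (Suc k)}"

text \<open>The slack \<open>3 * R * L0\<close> is needed for \<open>R > 0\<close>: rough geodesics need not be continuous,
  so the gain need not attain its supremum.\<close>

definition near_optimal_cut :: "nat \<Rightarrow> real \<times> real \<Rightarrow> bool" where
  "near_optimal_cut k p \<longleftrightarrow> p \<in> cut_box k \<and>
     (\<forall>q\<in>cut_box k. cut_gain k (fst q) (snd q) \<le> cut_gain k (fst p) (snd p) + 3 * R * L0)"

lemma cut_box_nonempty: "cut_box k \<noteq> {}"
  using side_len_nonneg unfolding cut_box_def by auto

lemma cut_gain_le:
  assumes "q \<in> cut_box k"
  shows "cut_gain k (fst q) (snd q) \<le> side_len k + side_len (Suc k)"
proof -
  have "0 \<le> L0 * d (side k (fst q)) (side (Suc k) (snd q))" using L0_gt_1 by simp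
  then show ?thesis using assms unfolding cut_gain_def cut_box_def by (auto simp: mem_Times_iff)
qed

lemma cut_gain_lipschitz:
  assumes "R = 0"
  shows "(2 * (1 + L0))-lipschitz_on (cut_box k) (\<lambda>q. cut_gain k (fst q) (snd q))"
proof (rule lipschitz_onI)
  show "0 \<le> 2 * (1 + L0)" using L0_gt_1 by simp
  fix p q assume "p \<in> cut_box k" "q \<in> cut_box k"
  then have p: "fst p \<in> {0..side_len k}" "snd p \<in> {0..side_len (Suc k)}"
    and q: "fst q \<in> {0..side_len k}" "snd q \<in> {0..side_len (Suc k)}"
    by (auto simp: cut_box_def mem_Times_iff)
  define Dp where "Dp = d (side k (fst p)) (side (Suc k) (snd p))"
  define Dq where "Dq = d (side k (fst q)) (side (Suc k) (snd q))"
  have fst_le: "\<bar>fst p - fst q\<bar> \<le> dist p q" and snd_le: "\<bar>snd p - snd q\<bar> \<le> dist p q"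
    using dist_fst_le[of p q] dist_snd_le[of p q] by (simp_all add: dist_real_def)
  have "\<bar>Dq - Dp\<bar> \<le> d (side k (fst p)) (side k (fst q)) + d (side (Suc k) (snd p)) (side (Suc k) (snd q))"
    unfolding Dp_def Dq_def using p q side_in by (intro mdist_diff_le)
  moreover have "d (side k (fst p)) (side k (fst q)) \<le> \<bar>fst p - fst q\<bar>"
    "d (side (Suc k) (snd p)) (side (Suc k) (snd q)) \<le> \<bar>snd p - snd q\<bar>"
    using side_dist_le[OF p(1) q(1)] side_dist_le[OF p(2) q(2)] assms by simp_all
  ultimately have D: "L0 * \<bar>Dq - Dp\<bar> \<le> L0 * (2 * dist p q)"
    using fst_le snd_le L0_gt_1 by (intro mult_left_mono) linarith+
  have "cut_gain k (fst p) (snd p) - cut_gain k (fst q) (snd q) = (fst q - fst p) + (snd p - snd q) + L0 * (Dq - Dp)"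
    unfolding cut_gain_def Dp_def Dq_def by (simp add: algebra_simps)
  moreover have "\<bar>L0 * (Dq - Dp)\<bar> = L0 * \<bar>Dq - Dp\<bar>"
    using L0_gt_1 by (simp add: abs_mult)
  ultimately have "\<bar>cut_gain k (fst p) (snd p) - cut_gain k (fst q) (snd q)\<bar>
      \<le> \<bar>fst q - fst p\<bar> + \<bar>snd p - snd q\<bar> + L0 * \<bar>Dq - Dp\<bar>"
    using abs_triangle_ineq[of "fst q - fst p + (snd p - snd q)" "L0 * (Dq - Dp)"]
      abs_triangle_ineq[of "fst q - fst p" "snd p - snd q"] by linarith
  then show "dist (cut_gain k (fst p) (snd p)) (cut_gain k (fst q) (snd q)) \<le> 2 * (1 + L0) * dist p q"
    using fst_le snd_le D by (simp add: dist_real_def algebra_simps abs_minus_commute)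
qed

lemma near_optimal_cut_exists: "\<exists>p. near_optimal_cut k p"
proof (cases "R = 0")
  case True
  have "compact (cut_box k)" unfolding cut_box_def by (intro compact_Times) auto
  from continuous_attains_sup[OF this cut_box_nonempty
      lipschitz_on_continuous_on[OF cut_gain_lipschitz[OF True]]]
  obtain p where "p \<in> cut_box k" "\<forall>q\<in>cut_box k. cut_gain k (fst q) (snd q) \<le> cut_gain k (fst p) (snd p)"
    by blast
  then have "near_optimal_cut k p" using True unfolding near_optimal_cut_def by simp
  then show ?thesis by blast
next
  case False
  let ?g = "\<lambda>q. cut_gain k (fst q) (snd q)"
  have bdd: "bdd_above (?g ` cut_box k)"
    using cut_gain_le by (intro bdd_aboveI) auto
  have "Sup (?g ` cut_box k) - 3 * R * L0 < Sup (?g ` cut_box k)"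
    using False R_nonneg L0_gt_1 by simp
  then obtain p where p: "p \<in> cut_box k" "Sup (?g ` cut_box k) - 3 * R * L0 < ?g p"
    using less_cSup_iff[of "?g ` cut_box k"] cut_box_nonempty bdd by auto
  have "?g q \<le> ?g p + 3 * R * L0" if "q \<in> cut_box k" for q
    using cSup_upper[OF imageI[OF that] bdd] p(2) by simp
  then show ?thesis using p(1) unfolding near_optimal_cut_def by blast
qed

definition cut :: "nat \<Rightarrow> real \<times> real" where "cut k = (SOME p. near_optimal_cut k p)"

definition cut_in :: "nat \<Rightarrow> real" where "cut_in k = fst (cut k)"

definition cut_out :: "nat \<Rightarrow> real" where "cut_out k = snd (cut k)"

lemma cut_near_optimal: "near_optimal_cut k (cut k)"
  unfolding cut_def using near_optimal_cut_exists by (rule someI_ex)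

lemma cut_in_bounds: "0 \<le> cut_in k" "cut_in k \<le> side_len k"
  and cut_out_bounds: "0 \<le> cut_out k" "cut_out k \<le> side_len (Suc k)"
proof -
  have "cut k \<in> cut_box k" using cut_near_optimal[of k] unfolding near_optimal_cut_def by blast
  then show "0 \<le> cut_in k" "cut_in k \<le> side_len k" "0 \<le> cut_out k" "cut_out k \<le> side_len (Suc k)"
    unfolding cut_box_def cut_in_def cut_out_def by (auto simp: mem_Times_iff)
qed

lemma cut_gain_le_cut:
  assumes "s \<in> {0..side_len k}" "t \<in> {0..side_len (Suc k)}"
  shows "cut_gain k s t \<le> cut_gain k (cut_in k) (cut_out k) + 3 * R * L0"
proof -
  have "(s, t) \<in> cut_box k" using assms by (simp add: cut_box_def)
  then have "cut_gain k (fst (s, t)) (snd (s, t)) \<le> cut_gain k (fst (cut k)) (snd (cut k)) + 3 * R * L0"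
    using cut_near_optimal[of k] unfolding near_optimal_cut_def by blast
  then show ?thesis by (simp add: cut_in_def cut_out_def)
qed

definition chord_start :: "nat \<Rightarrow> 'a" where "chord_start k = side k (cut_in k)"

definition chord_end :: "nat \<Rightarrow> 'a" where "chord_end k = side (Suc k) (cut_out k)"

definition chord_len :: "nat \<Rightarrow> real" where "chord_len k = d (chord_start k) (chord_end k)"

definition chord :: "nat \<Rightarrow> real \<Rightarrow> 'a" where
  "chord k = (SOME h. rough_geodesic X d R (chord_start k) (chord_end k) h)"

lemma chord_start_in: "chord_start k \<in> X"
  unfolding chord_start_def using side_in cut_in_bounds by auto

lemma chord_end_in: "chord_end k \<in> X"
  unfolding chord_end_def using side_in cut_out_bounds by auto

lemma chord_len_nonneg: "0 \<le> chord_len k"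
  unfolding chord_len_def by simp

lemma chord_rough_geodesic: "rough_geodesic X d R (chord_start k) (chord_end k) (chord k)"
  unfolding chord_def by (rule rough_geodesic_some[OF rough_geodesic chord_start_in chord_end_in])

lemma chord_start: "chord k 0 = chord_start k"
  and chord_end: "chord k (chord_len k) = chord_end k"
  and chord_in: "r \<in> {0..chord_len k} \<Longrightarrow> chord k r \<in> X"
  and chord_dist_le: "r \<in> {0..chord_len k} \<Longrightarrow> r' \<in> {0..chord_len k} \<Longrightarrow>
    d (chord k r) (chord k r') \<le> \<bar>r - r'\<bar> + R"
  and chord_dist_ge: "r \<in> {0..chord_len k} \<Longrightarrow> r' \<in> {0..chord_len k} \<Longrightarrow>
    \<bar>r - r'\<bar> - R \<le> d (chord k r) (chord k r')"
  using rough_geodesicD[OF chord_rough_geodesic[of k]] unfolding chord_len_def by auto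

lemma cut_gain_cut: "cut_gain k (cut_in k) (cut_out k) = side_len k - cut_in k + cut_out k - L0 * chord_len k"
  unfolding cut_gain_def chord_len_def chord_start_def chord_end_def by simp

lemma le_div_L0: "a - 4 * R * L0 \<le> L0 * x \<Longrightarrow> a / L0 - 4 * R \<le> x"
  using L0_gt_1 by (simp add: field_simps)

lemma side_chord_dist_ge:
  assumes s': "0 \<le> s'" "s' \<le> cut_in k" and r: "0 \<le> r" "r \<le> chord_len k"
  shows "((cut_in k - s') + r) / L0 - 4 * R \<le> d (side k s') (chord k r)"
proof (rule le_div_L0)
  have "cut_gain k s' (cut_out k) \<le> cut_gain k (cut_in k) (cut_out k) + 3 * R * L0"
    using s' cut_in_bounds[of k] cut_out_bounds[of k] by (intro cut_gain_le_cut) auto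
  then have gain: "(cut_in k - s') + L0 * chord_len k - 3 * R * L0 \<le> L0 * d (side k s') (chord_end k)"
    unfolding cut_gain_cut unfolding cut_gain_def chord_end_def by simp
  have in_X: "side k s' \<in> X" "chord k r \<in> X" "chord_end k \<in> X"
    using side_in chord_in s' r cut_in_bounds[of k] chord_end_in by auto
  have "d (side k s') (chord_end k) \<le> d (side k s') (chord k r) + d (chord k r) (chord k (chord_len k))"
    using triangle[OF in_X] chord_end by simp
  also have "\<dots> \<le> d (side k s') (chord k r) + (chord_len k - r + R)"
    using chord_dist_le[of r k "chord_len k"] r by simp
  finally have "L0 * d (side k s') (chord_end k) \<le> L0 * d (side k s') (chord k r) + L0 * chord_len k - L0 * r + L0 * R"
    using mult_left_mono[of _ _ L0] L0_gt_1 by (fastforce simp: algebra_simps)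
  moreover have "r \<le> L0 * r" using mult_right_mono[of 1 L0 r] r L0_gt_1 by simp
  ultimately show "(cut_in k - s') + r - 4 * R * L0 \<le> L0 * d (side k s') (chord k r)"
    using gain by (simp add: algebra_simps)
qed

lemma chord_side_dist_ge:
  assumes r: "0 \<le> r" "r \<le> chord_len k" and t': "cut_out k \<le> t'" "t' \<le> side_len (Suc k)"
  shows "((chord_len k - r) + (t' - cut_out k)) / L0 - 4 * R \<le> d (chord k r) (side (Suc k) t')"
proof (rule le_div_L0)
  have "cut_gain k (cut_in k) t' \<le> cut_gain k (cut_in k) (cut_out k) + 3 * R * L0"
    using t' cut_in_bounds[of k] cut_out_bounds[of k] by (intro cut_gain_le_cut) auto
  then have gain: "(t' - cut_out k) + L0 * chord_len k - 3 * R * L0 \<le> L0 * d (chord_start k) (side (Suc k) t')"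
    unfolding cut_gain_cut unfolding cut_gain_def chord_start_def by simp
  have in_X: "chord_start k \<in> X" "chord k r \<in> X" "side (Suc k) t' \<in> X"
    using side_in chord_in r t' cut_out_bounds[of k] chord_start_in by auto
  have "d (chord_start k) (side (Suc k) t') \<le> d (chord k 0) (chord k r) + d (chord k r) (side (Suc k) t')"
    using triangle[OF in_X] chord_start by simp
  also have "\<dots> \<le> (r + R) + d (chord k r) (side (Suc k) t')"
    using chord_dist_le[of 0 k r] r chord_len_nonneg by simp
  finally have "L0 * d (chord_start k) (side (Suc k) t') \<le> L0 * r + L0 * R + L0 * d (chord k r) (side (Suc k) t')"
    using mult_left_mono[of _ _ L0] L0_gt_1 by (fastforce simp: algebra_simps)
  moreover have "chord_len k - r \<le> L0 * chord_len k - L0 * r"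
    using mult_right_mono[of 1 L0 "chord_len k - r"] r L0_gt_1 by (simp add: algebra_simps)
  ultimately show "(chord_len k - r) + (t' - cut_out k) - 4 * R * L0 \<le> L0 * d (chord k r) (side (Suc k) t')"
    using gain by (simp add: algebra_simps)
qed

lemma side_side_dist_ge:
  assumes s': "0 \<le> s'" "s' \<le> cut_in k" and t': "cut_out k \<le> t'" "t' \<le> side_len (Suc k)"
  shows "((cut_in k - s') + chord_len k + (t' - cut_out k)) / L0 - 4 * R \<le> d (side k s') (side (Suc k) t')"
proof (rule le_div_L0)
  have "cut_gain k s' t' \<le> cut_gain k (cut_in k) (cut_out k) + 3 * R * L0"
    using s' t' cut_in_bounds[of k] cut_out_bounds[of k] by (intro cut_gain_le_cut) auto
  then have "(cut_in k - s') + (t' - cut_out k) + L0 * chord_len k - 3 * R * L0 \<le> L0 * d (side k s') (side (Suc k) t')"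
    unfolding cut_gain_cut unfolding cut_gain_def by simp
  moreover have "chord_len k \<le> L0 * chord_len k"
    using mult_right_mono[of 1 L0 "chord_len k"] chord_len_nonneg[of k] L0_gt_1 by simp
  moreover have "3 * R * L0 \<le> 4 * R * L0" using R_nonneg L0_gt_1 by simp
  ultimately show "(cut_in k - s') + chord_len k + (t' - cut_out k) - 4 * R * L0 \<le> L0 * d (side k s') (side (Suc k) t')"
    by linarith
qed

definition cut_bound :: real where "cut_bound = (2 * lam * (K - 1 / K) + 5 * R) * L0 / (L0 - 1)"

lemma side_len_ge: "lam / K \<le> side_len k"
  using vert_dist_bounds(1)[of k "Suc k"] cyclic_dist_Suc[OF n_ge_2] unfolding side_len_def by simp

lemma chord_len_le_cut:
  "L0 * chord_len k \<le> (side_len k - cut_in k) + cut_out k + 3 * R * L0"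
proof -
  have "cut_gain k (side_len k) 0 \<le> cut_gain k (cut_in k) (cut_out k) + 3 * R * L0"
    using side_len_nonneg by (intro cut_gain_le_cut) auto
  moreover have "cut_gain k (side_len k) 0 = 0"
    unfolding cut_gain_def using side_start[of "Suc k"] side_end[of k] vert_in by simp
  ultimately show ?thesis unfolding cut_gain_cut by simp
qed

lemma chord_len_ge_cut:
  "(side_len k - cut_in k) + cut_out k - 2 * lam * (K - 1 / K) - 2 * R \<le> chord_len k"
proof -
  have "d (vert k) (chord_start k) \<le> cut_in k + R"
    using side_dist_le[of 0 k "cut_in k"] side_start[of k] cut_in_bounds[of k] unfolding chord_start_def by simp
  moreover have "d (chord_end k) (vert (Suc (Suc k))) \<le> side_len (Suc k) - cut_out k + R"
    using side_dist_le[of "cut_out k" "Suc k" "side_len (Suc k)"] side_end[of "Suc k"] cut_out_bounds[of k]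
    unfolding chord_end_def by simp
  moreover have "2 * lam / K \<le> d (vert k) (vert (Suc (Suc k)))"
    using vert_dist_bounds(1)[of k "Suc (Suc k)"] cyclic_dist_Suc_Suc[OF n_ge_4, of k] by (simp add: mult.commute)
  moreover have "d (vert k) (vert (Suc (Suc k))) \<le> d (vert k) (chord_start k) + chord_len k + d (chord_end k) (vert (Suc (Suc k)))"
    using triangle[of "vert k" "chord_start k" "vert (Suc (Suc k))"]
      triangle[of "chord_start k" "chord_end k" "vert (Suc (Suc k))"] vert_in chord_start_in chord_end_in
    unfolding chord_len_def by fastforce
  ultimately show ?thesis
    using side_len_le[of k] side_len_le[of "Suc k"] by (simp add: algebra_simps)
qed

lemma cut_size_le: "(side_len k - cut_in k) + cut_out k \<le> cut_bound"
proof -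
  have "L0 * ((side_len k - cut_in k) + cut_out k - 2 * lam * (K - 1 / K) - 2 * R) \<le> L0 * chord_len k"
    using chord_len_ge_cut L0_gt_1 by (intro mult_left_mono) auto
  then have "(L0 - 1) * ((side_len k - cut_in k) + cut_out k) \<le> (2 * lam * (K - 1 / K) + 5 * R) * L0"
    using chord_len_le_cut[of k] by (simp add: algebra_simps)
  then show ?thesis unfolding cut_bound_def using L0_gt_1 by (simp add: field_simps)
qed

lemma cut_bound_nonneg: "0 \<le> cut_bound"
proof -
  have "1 < K * K" by (rule less_1_mult[OF K_gt_1 K_gt_1])
  then have "0 \<le> K - 1 / K" using K_gt_1 by (simp add: field_simps)
  then show ?thesis
    unfolding cut_bound_def using L0_gt_1 R_nonneg lam_pos by (intro divide_nonneg_pos mult_nonneg_nonneg) auto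
qed

lemma side_len_minus_cut_in_le: "side_len k - cut_in k \<le> cut_bound"
  and cut_out_le: "cut_out k \<le> cut_bound"
  using cut_size_le[of k] cut_in_bounds[of k] cut_out_bounds[of k] by auto

lemma chord_len_le: "chord_len k \<le> cut_bound + 3 * R"
proof -
  have "L0 * chord_len k \<le> L0 * (cut_bound + 3 * R)"
    using chord_len_le_cut[of k] cut_size_le[of k] cut_bound_nonneg L0_gt_1 mult_right_mono[of 1 L0 cut_bound]
    by (simp add: algebra_simps)
  then show ?thesis using L0_gt_1 by simp
qed

lemma cut_gain_add_n: "cut_gain (k + n) = cut_gain k"
  unfolding cut_gain_def[abs_def] side_add_n side_len_add_n by (simp add: side_add_n[of "Suc k", simplified])

lemma cut_add_n: "cut (k + n) = cut k"
  unfolding cut_def near_optimal_cut_def cut_box_def cut_gain_add_n side_len_add_n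
  by (simp add: side_len_add_n[of "Suc k", simplified])

lemma cut_in_add_n: "cut_in (k + n) = cut_in k" and cut_out_add_n: "cut_out (k + n) = cut_out k"
  unfolding cut_in_def cut_out_def cut_add_n by simp_all

lemma chord_len_add_n: "chord_len (k + n) = chord_len k" and chord_add_n: "chord (k + n) = chord k"
  unfolding chord_len_def chord_def chord_start_def chord_end_def cut_in_add_n cut_out_add_n side_add_n
  by (simp_all add: side_add_n[of "Suc k", simplified])

end

locale short_cut_ngon = cut_ngon +
  assumes cuts_short: "2 * cut_bound < lam / K"
begin

definition mid_len :: "nat \<Rightarrow> real" where "mid_len k = cut_in (Suc k) - cut_out k"

definition piece_len :: "nat \<Rightarrow> real" where "piece_len k = chord_len k + mid_len k"

definition mid_param :: "nat \<Rightarrow> real \<Rightarrow> real" where "mid_param k \<tau> = cut_out k + (\<tau> - chord_len k)"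

definition piece :: "nat \<Rightarrow> real \<Rightarrow> 'a" where
  "piece k \<tau> = (if \<tau> \<le> chord_len k then chord k \<tau> else side (Suc k) (mid_param k \<tau>))"

lemma mid_len_ge: "lam / K - 2 * cut_bound \<le> mid_len k"
  using side_len_ge[of "Suc k"] side_len_minus_cut_in_le[of "Suc k"] cut_out_le[of k]
  unfolding mid_len_def by simp

lemma mid_len_le: "mid_len k \<le> K * lam"
  using side_len_le[of "Suc k"] cut_in_bounds[of "Suc k"] cut_out_bounds[of k] unfolding mid_len_def by simp

lemma piece_len_ge: "lam / K - 2 * cut_bound \<le> piece_len k"
  using mid_len_ge[of k] chord_len_nonneg[of k] unfolding piece_len_def by simp

lemma piece_len_le: "piece_len k \<le> K * lam + cut_bound + 3 * R"
  using mid_len_le[of k] chord_len_le[of k] unfolding piece_len_def by simp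

lemma piece_len_pos: "0 < piece_len k"
  using piece_len_ge[of k] cuts_short by simp

lemma piece_mid: "chord_len k \<le> \<tau> \<Longrightarrow> piece k \<tau> = side (Suc k) (mid_param k \<tau>)"
  unfolding piece_def mid_param_def using chord_end[of k] unfolding chord_end_def by auto

lemma mid_param_bounds:
  assumes "chord_len k \<le> \<tau>" "\<tau> \<le> piece_len k"
  shows "cut_out k \<le> mid_param k \<tau>" "mid_param k \<tau> \<le> cut_in (Suc k)" "mid_param k \<tau> \<in> {0..side_len (Suc k)}"
  using assms cut_out_bounds[of k] cut_in_bounds[of "Suc k"]
  unfolding piece_len_def mid_len_def mid_param_def by auto

lemma piece_in: "0 \<le> \<tau> \<Longrightarrow> \<tau> \<le> piece_len k \<Longrightarrow> piece k \<tau> \<in> X"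
  using chord_in piece_mid mid_param_bounds side_in unfolding piece_def
  by (cases "\<tau> \<le> chord_len k") auto

lemma chord_start_dist_vert: "d (chord_start k) (vert (Suc k)) \<le> cut_bound + R"
proof -
  have "d (chord_start k) (vert (Suc k)) \<le> side_len k - cut_in k + R"
    using side_dist_le[of "cut_in k" k "side_len k"] cut_in_bounds[of k] side_end
    unfolding chord_start_def by simp
  then show ?thesis using side_len_minus_cut_in_le[of k] by simp
qed

lemma chord_end_dist_vert: "d (chord_end k) (vert (Suc (Suc k))) \<le> side_len (Suc k) - cut_out k + R"
  using side_dist_le[of "cut_out k" "Suc k" "side_len (Suc k)"] cut_out_bounds[of k] side_end
  unfolding chord_end_def by simp

lemma piece_dist_vert_Suc:
  assumes "0 \<le> \<tau>" "\<tau> \<le> piece_len k"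
  shows "d (piece k \<tau>) (vert (Suc k)) \<le> \<tau> + cut_bound + 2 * R"
proof (cases "\<tau> \<le> chord_len k")
  case True
  have "d (chord k \<tau>) (vert (Suc k)) \<le> d (chord k \<tau>) (chord k 0) + d (chord_start k) (vert (Suc k))"
    using triangle[of "chord k \<tau>" "chord k 0" "vert (Suc k)"] chord_in assms True vert_in chord_len_nonneg
      chord_start_in
    by (simp add: chord_start)
  also have "\<dots> \<le> (\<tau> + R) + (cut_bound + R)"
    using chord_dist_le[of \<tau> k 0] assms True chord_len_nonneg chord_start_dist_vert by (intro add_mono) auto
  finally show ?thesis unfolding piece_def using True by simp
next
  case False
  then have "d (piece k \<tau>) (vert (Suc k)) \<le> mid_param k \<tau> + R"
    using side_dist_le[of "mid_param k \<tau>" "Suc k" 0] mid_param_bounds[of k \<tau>] assms side_len_nonneg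
    by (simp add: piece_mid side_start)
  also have "\<dots> \<le> \<tau> + cut_bound + 2 * R"
    using cut_out_le[of k] chord_len_nonneg[of k] R_nonneg unfolding mid_param_def by simp
  finally show ?thesis .
qed

lemma piece_dist_vert_Suc_Suc:
  assumes "0 \<le> \<tau>" "\<tau> \<le> piece_len k"
  shows "d (piece k \<tau>) (vert (Suc (Suc k))) \<le> (piece_len k - \<tau>) + cut_bound + 2 * R"
proof (cases "\<tau> \<le> chord_len k")
  case True
  have "d (chord k \<tau>) (vert (Suc (Suc k)))
      \<le> d (chord k \<tau>) (chord k (chord_len k)) + d (chord_end k) (vert (Suc (Suc k)))"
    using triangle[of "chord k \<tau>" "chord k (chord_len k)" "vert (Suc (Suc k))"] chord_in assms True vert_in
      chord_end_in
    by (simp add: chord_end)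
  also have "\<dots> \<le> (chord_len k - \<tau> + R) + (mid_len k + cut_bound + R)"
    using chord_dist_le[of \<tau> k "chord_len k"] assms True chord_end_dist_vert[of k]
      side_len_minus_cut_in_le[of "Suc k"]
    unfolding mid_len_def by (intro add_mono) auto
  finally show ?thesis unfolding piece_def piece_len_def using True by simp
next
  case False
  then have "d (piece k \<tau>) (vert (Suc (Suc k))) \<le> side_len (Suc k) - mid_param k \<tau> + R"
    using side_dist_le[of "mid_param k \<tau>" "Suc k" "side_len (Suc k)"] mid_param_bounds[of k \<tau>] assms
      side_len_nonneg
    by (simp add: piece_mid side_end)
  also have "\<dots> \<le> (piece_len k - \<tau>) + cut_bound + 2 * R"
    using side_len_minus_cut_in_le[of "Suc k"] R_nonneg unfolding piece_len_def mid_len_def mid_param_def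
    by simp
  finally show ?thesis .
qed

lemma piece_dist_le:
  assumes "0 \<le> \<tau>" "\<tau> \<le> \<tau>'" "\<tau>' \<le> piece_len k"
  shows "d (piece k \<tau>) (piece k \<tau>') \<le> \<tau>' - \<tau> + 2 * R"
proof (cases "\<tau>' \<le> chord_len k")
  case True
  then show ?thesis unfolding piece_def using chord_dist_le[of \<tau> k \<tau>'] assms R_nonneg by auto
next
  case mid': False
  show ?thesis
  proof (cases "\<tau> \<le> chord_len k")
    case True
    have "d (chord k \<tau>) (piece k \<tau>') \<le> d (chord k \<tau>) (chord k (chord_len k)) + d (chord_end k) (piece k \<tau>')"
      using triangle[of "chord k \<tau>" "chord k (chord_len k)" "piece k \<tau>'"] chord_in piece_in assms True
        chord_end_in
      by (simp add: chord_end)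
    also have "\<dots> \<le> (chord_len k - \<tau> + R) + (\<tau>' - chord_len k + R)"
    proof (intro add_mono)
      show "d (chord k \<tau>) (chord k (chord_len k)) \<le> chord_len k - \<tau> + R"
        using chord_dist_le[of \<tau> k "chord_len k"] assms True by simp
      show "d (chord_end k) (piece k \<tau>') \<le> \<tau>' - chord_len k + R"
        using side_dist_le[of "cut_out k" "Suc k" "mid_param k \<tau>'"] mid_param_bounds[of k \<tau>'] mid' assms
          cut_out_bounds[of k]
        by (simp add: chord_end_def piece_mid mid_param_def)
    qed
    finally show ?thesis unfolding piece_def using True by simp
  next
    case False
    then have "d (piece k \<tau>) (piece k \<tau>') \<le> \<bar>mid_param k \<tau> - mid_param k \<tau>'\<bar> + R"
      using side_dist_le mid_param_bounds[of k \<tau>] mid_param_bounds[of k \<tau>'] mid' assms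
      by (simp add: piece_mid)
    then show ?thesis using assms R_nonneg by (simp add: mid_param_def)
  qed
qed

lemma div_L0_minus_4R_le:
  assumes "0 \<le> x"
  shows "x / L0 - 4 * R \<le> x - R"
proof -
  have "x / L0 \<le> x" using assms L0_gt_1 by (simp add: divide_le_eq mult_le_cancel_left1)
  then show ?thesis using R_nonneg by simp
qed

lemma piece_dist_ge:
  assumes "0 \<le> \<tau>" "\<tau> \<le> \<tau>'" "\<tau>' \<le> piece_len k"
  shows "(\<tau>' - \<tau>) / L0 - 4 * R \<le> d (piece k \<tau>) (piece k \<tau>')"
proof (cases "\<tau>' \<le> chord_len k")
  case True
  then have "\<tau>' - \<tau> - R \<le> d (piece k \<tau>) (piece k \<tau>')"
    unfolding piece_def using chord_dist_ge[of \<tau> k \<tau>'] assms by auto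
  then show ?thesis using div_L0_minus_4R_le[of "\<tau>' - \<tau>"] assms by simp
next
  case mid': False
  show ?thesis
  proof (cases "\<tau> \<le> chord_len k")
    case True
    then show ?thesis
      using chord_side_dist_ge[of \<tau> k "mid_param k \<tau>'"] assms mid_param_bounds[of k \<tau>'] mid'
      by (simp add: piece_def mid_param_def)
  next
    case False
    then have "\<bar>mid_param k \<tau> - mid_param k \<tau>'\<bar> - R \<le> d (piece k \<tau>) (piece k \<tau>')"
      using side_dist_ge mid_param_bounds[of k \<tau>] mid_param_bounds[of k \<tau>'] mid' assms
      by (simp add: piece_mid)
    then show ?thesis using div_L0_minus_4R_le[of "\<tau>' - \<tau>"] assms by (simp add: mid_param_def)
  qed
qed

lemma piece_dist_next_le:
  assumes \<tau>: "chord_len k \<le> \<tau>" "\<tau> \<le> piece_len k" and \<tau>': "0 \<le> \<tau>'" "\<tau>' \<le> piece_len (Suc k)"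
  shows "d (piece k \<tau>) (piece (Suc k) \<tau>') \<le> (piece_len k - \<tau>) + \<tau>' + 2 * R"
proof -
  have "d (piece k \<tau>) (chord_start (Suc k)) \<le> piece_len k - \<tau> + R"
    using side_dist_le[of "mid_param k \<tau>" "Suc k" "cut_in (Suc k)"] mid_param_bounds[OF \<tau>]
      cut_in_bounds[of "Suc k"] \<tau>
    by (simp add: piece_mid chord_start_def piece_len_def mid_len_def mid_param_def)
  moreover have "d (chord_start (Suc k)) (piece (Suc k) \<tau>') \<le> \<tau>' + R"
  proof (cases "\<tau>' \<le> chord_len (Suc k)")
    case True
    then show ?thesis
      unfolding piece_def using chord_dist_le[of 0 "Suc k" \<tau>'] chord_start[of "Suc k"] \<tau>' chord_len_nonneg
      by simp
  next
    case False
    have "d (chord_end (Suc k)) (piece (Suc k) \<tau>') \<le> \<tau>' - chord_len (Suc k) + R"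
      using side_dist_le[of "cut_out (Suc k)" "Suc (Suc k)" "mid_param (Suc k) \<tau>'"]
        mid_param_bounds[of "Suc k" \<tau>'] False \<tau>' cut_out_bounds[of "Suc k"]
      by (simp add: chord_end_def piece_mid mid_param_def)
    then show ?thesis
      using triangle[of "chord_start (Suc k)" "chord_end (Suc k)" "piece (Suc k) \<tau>'"]
        chord_start_in chord_end_in piece_in[OF \<tau>']
      unfolding chord_len_def by simp
  qed
  moreover have "0 \<le> \<tau>" using \<tau>(1) chord_len_nonneg[of k] by linarith
  then have "d (piece k \<tau>) (piece (Suc k) \<tau>')
      \<le> d (piece k \<tau>) (chord_start (Suc k)) + d (chord_start (Suc k)) (piece (Suc k) \<tau>')"
    using triangle[OF piece_in[OF _ \<tau>(2)] chord_start_in piece_in[OF \<tau>']] by blast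
  ultimately show ?thesis by linarith
qed

lemma piece_dist_next_ge:
  assumes \<tau>: "chord_len k \<le> \<tau>" "\<tau> \<le> piece_len k" and \<tau>': "0 \<le> \<tau>'" "\<tau>' \<le> piece_len (Suc k)"
  shows "((piece_len k - \<tau>) + \<tau>') / L0 - 4 * R \<le> d (piece k \<tau>) (piece (Suc k) \<tau>')"
proof -
  have p: "0 \<le> mid_param k \<tau>" "mid_param k \<tau> \<le> cut_in (Suc k)"
    "cut_in (Suc k) - mid_param k \<tau> = piece_len k - \<tau>"
    using mid_param_bounds[OF \<tau>] cut_out_bounds[of k] unfolding piece_len_def mid_len_def mid_param_def
    by auto
  show ?thesis
  proof (cases "\<tau>' \<le> chord_len (Suc k)")
    case True
    then have "piece (Suc k) \<tau>' = chord (Suc k) \<tau>'" by (simp add: piece_def)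
    then show ?thesis
      using side_chord_dist_ge[of "mid_param k \<tau>" "Suc k" \<tau>'] p \<tau> \<tau>' True
      by (simp add: piece_mid)
  next
    case False
    then have mid': "chord_len (Suc k) \<le> \<tau>'" by simp
    have len: "(cut_in (Suc k) - mid_param k \<tau>) + chord_len (Suc k) + (mid_param (Suc k) \<tau>' - cut_out (Suc k))
        = (piece_len k - \<tau>) + \<tau>'"
      using p(3) by (simp add: mid_param_def)
    have "mid_param (Suc k) \<tau>' \<le> side_len (Suc (Suc k))"
      using mid_param_bounds(3)[OF mid' \<tau>'(2)] by simp
    from side_side_dist_ge[OF p(1,2) mid_param_bounds(1)[OF mid' \<tau>'(2)] this]
    show ?thesis unfolding piece_mid[OF \<tau>(1)] piece_mid[OF mid'] len .
  qed
qed

lemma mid_len_add_n: "mid_len (k + n) = mid_len k"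
  unfolding mid_len_def using cut_in_add_n[of "Suc k"] cut_out_add_n[of k] by simp

lemma piece_len_add_n: "piece_len (k + n) = piece_len k"
  unfolding piece_len_def chord_len_add_n mid_len_add_n ..

lemma piece_add_n: "piece (k + n) = piece k"
  unfolding piece_def[abs_def] mid_param_def[abs_def] chord_len_add_n chord_add_n cut_out_add_n
    add_Suc[symmetric] side_add_n ..

definition speed_min :: real where "speed_min = (lam / K - 2 * cut_bound) / lam"

definition speed_max :: real where "speed_max = (K * lam + cut_bound + 3 * R) / lam"

lemma piece_len_speed_bounds: "lam * speed_min \<le> piece_len k" "piece_len k \<le> lam * speed_max"
  using piece_len_ge[of k] piece_len_le[of k] lam_pos unfolding speed_min_def speed_max_def by simp_all

lemma K_le_speed_max: "K \<le> speed_max"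
  using cut_bound_nonneg R_nonneg lam_pos unfolding speed_max_def by (simp add: le_divide_eq)

end

section \<open>Quasi-isometric circles from \<open>n\<close>-gons\<close>

text \<open>Parameters less than \<open>\<theta>\<close> apart lie in the same or in adjacent pieces, where the
  local estimates for pieces apply; farther apart, the bilipschitz bounds for the vertices
  dominate.\<close>

locale quasi_circle_ngon = short_cut_ngon +
  fixes L \<theta> :: real
  assumes n_ge_6: "6 \<le> n" and theta_pos: "0 < \<theta>"
    and speed_min_ge: "L0 / L \<le> speed_min"
    and speed_max_le: "speed_max \<le> L"
    and near_short: "speed_max * \<theta> \<le> lam / K - 2 * cut_bound"
    and near_lower: "2 * lam * (speed_max - 1 / K) + 2 * (cut_bound + 2 * R) \<le> \<theta> * (1 / K - 1 / L)"
    and near_upper: "2 * (cut_bound + 2 * R) \<le> (L - speed_max) * \<theta>"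
    and far_lower: "real n * lam / (2 * L)
      \<le> lam * (real n / 2 - 2) / K - 2 * lam * speed_max - 2 * (cut_bound + 2 * R)"
begin

definition speed :: "nat \<Rightarrow> real" where "speed k = piece_len k / lam"

definition piece_index :: "real \<Rightarrow> nat" where "piece_index x = nat \<lfloor>x / lam\<rfloor>"

definition quasi_loop :: "real \<Rightarrow> 'a" where
  "quasi_loop x = piece (piece_index x) (speed (piece_index x) * (x - real (piece_index x) * lam))"

lemma speed_bounds: "speed_min \<le> speed k" "speed k \<le> speed_max" "0 < speed k"
  using piece_len_speed_bounds[of k] piece_len_pos[of k] lam_pos unfolding speed_def
  by (simp_all add: field_simps)

lemma speed_max_ge_1: "1 \<le> speed_max"
  using K_le_speed_max K_gt_1 by simp

lemma K_le_L: "K \<le> L"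
  using K_le_speed_max speed_max_le by simp

lemma theta_le_lam: "\<theta> \<le> lam"
proof -
  have "\<theta> \<le> speed_max * \<theta>" using speed_max_ge_1 theta_pos by simp
  moreover have "lam / K \<le> lam" using K_gt_1 lam_pos by (simp add: divide_le_eq)
  ultimately show ?thesis using near_short cut_bound_nonneg by linarith
qed

lemma div_L_le_div_L0: "0 \<le> z \<Longrightarrow> speed_min * z \<le> w \<Longrightarrow> z / L \<le> w / L0"
proof -
  assume "0 \<le> z" "speed_min * z \<le> w"
  moreover have "L0 / L * z \<le> speed_min * z" using speed_min_ge \<open>0 \<le> z\<close> by (rule mult_right_mono)
  ultimately have "L0 * z / L \<le> w" by simp
  then show ?thesis using L0_gt_1 by (simp add: field_simps)
qed

lemma le_L_mult: "0 \<le> z \<Longrightarrow> w \<le> speed_max * z \<Longrightarrow> w \<le> L * z"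
  using mult_right_mono[OF speed_max_le] by fastforce

lemma speed_add_n: "speed (k + n) = speed k"
  unfolding speed_def piece_len_add_n ..

lemma speed_param_bounds:
  assumes "0 \<le> P" "P < lam"
  shows "0 \<le> speed k * P" "speed k * P \<le> piece_len k" "piece_len k - speed k * P = speed k * (lam - P)"
proof -
  show "0 \<le> speed k * P" using speed_bounds(3)[of k] assms by simp
  have "speed k * P \<le> speed k * lam" using speed_bounds(3)[of k] assms by (intro mult_left_mono) auto
  then show "speed k * P \<le> piece_len k" using lam_pos unfolding speed_def by simp
  have "speed k * lam = piece_len k" using lam_pos unfolding speed_def by simp
  then show "piece_len k - speed k * P = speed k * (lam - P)" by (simp add: right_diff_distrib)
qed

lemma quasi_loop_eq:
  assumes "0 \<le> P" "P < lam"
  shows "quasi_loop (real k * lam + P) = piece k (speed k * P)"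
  unfolding quasi_loop_def piece_index_def nat_floor_divide_eq[OF lam_pos assms] by simp

lemma quasi_loop_decomp:
  assumes "0 \<le> x"
  obtains k P where "0 \<le> P" "P < lam" "x = real k * lam + P"
proof -
  have "real (piece_index x) * lam \<le> x" "x < real (piece_index x) * lam + lam"
    using nat_floor_divide_bounds[OF lam_pos assms] unfolding piece_index_def by auto
  then show ?thesis
    using that[of "x - real (piece_index x) * lam" "piece_index x"] by simp
qed

lemma quasi_loop_in:
  assumes "0 \<le> x"
  shows "quasi_loop x \<in> X"
proof -
  obtain k P where "0 \<le> P" "P < lam" "x = real k * lam + P"
    using quasi_loop_decomp[OF assms] .
  then show ?thesis by (simp add: quasi_loop_eq piece_in speed_param_bounds)
qed

lemma quasi_loop_add_len:
  assumes "0 \<le> x"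
  shows "quasi_loop (x + real n * lam) = quasi_loop x"
proof -
  obtain k P where P: "0 \<le> P" "P < lam" and x: "x = real k * lam + P"
    using quasi_loop_decomp[OF assms] .
  have "quasi_loop (x + real n * lam) = quasi_loop (real (k + n) * lam + P)"
    unfolding x by (simp add: algebra_simps)
  also have "\<dots> = quasi_loop x"
    unfolding x quasi_loop_eq[OF P] piece_add_n speed_add_n ..
  finally show ?thesis .
qed

lemma quasi_loop_dist_vert:
  assumes P: "0 \<le> P" "P < lam"
  shows "d (quasi_loop (real k * lam + P)) (vert (Suc k)) \<le> speed_max * P + cut_bound + 2 * R"
    and "d (quasi_loop (real k * lam + P)) (vert (Suc (Suc k))) \<le> speed_max * (lam - P) + cut_bound + 2 * R"
proof -
  note bounds = speed_param_bounds[OF P, of k]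
  have "speed k * P \<le> speed_max * P" "speed k * (lam - P) \<le> speed_max * (lam - P)"
    using speed_bounds(2)[of k] P by (simp_all add: mult_right_mono)
  then show "d (quasi_loop (real k * lam + P)) (vert (Suc k)) \<le> speed_max * P + cut_bound + 2 * R"
    and "d (quasi_loop (real k * lam + P)) (vert (Suc (Suc k))) \<le> speed_max * (lam - P) + cut_bound + 2 * R"
    using piece_dist_vert_Suc[OF bounds(1,2)] piece_dist_vert_Suc_Suc[OF bounds(1,2)] bounds(3)
    unfolding quasi_loop_eq[OF P] by linarith+
qed

lemma quasi_loop_dist_same_piece:
  assumes "0 \<le> P" "P \<le> P'" "P' < lam"
  shows "(P' - P) / L - 4 * R \<le> d (quasi_loop (real k * lam + P)) (quasi_loop (real k * lam + P'))"
    and "d (quasi_loop (real k * lam + P)) (quasi_loop (real k * lam + P')) \<le> L * (P' - P) + 4 * R"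
proof -
  have eqs: "quasi_loop (real k * lam + P) = piece k (speed k * P)"
    "quasi_loop (real k * lam + P') = piece k (speed k * P')"
    using assms by (simp_all add: quasi_loop_eq)
  have le: "speed k * P \<le> speed k * P'"
    using assms speed_bounds(3)[of k] by (simp add: mult_left_mono)
  have bounds: "0 \<le> speed k * P" "speed k * P' \<le> piece_len k"
    using speed_param_bounds[of P k] speed_param_bounds[of P' k] assms by auto
  have diff: "speed k * P' - speed k * P = speed k * (P' - P)" by (simp add: algebra_simps)
  have "(P' - P) / L \<le> speed k * (P' - P) / L0"
    using assms speed_bounds(1)[of k] by (intro div_L_le_div_L0) (auto simp: mult_right_mono)
  then show "(P' - P) / L - 4 * R \<le> d (quasi_loop (real k * lam + P)) (quasi_loop (real k * lam + P'))"
    using piece_dist_ge[OF bounds(1) le bounds(2)] unfolding eqs diff by linarith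
  have "speed k * (P' - P) \<le> L * (P' - P)"
    using assms speed_bounds(2)[of k] by (intro le_L_mult) (auto simp: mult_right_mono)
  then show "d (quasi_loop (real k * lam + P)) (quasi_loop (real k * lam + P')) \<le> L * (P' - P) + 4 * R"
    using piece_dist_le[OF bounds(1) le bounds(2)] R_nonneg unfolding eqs diff by linarith
qed

lemma quasi_loop_dist_adjacent:
  assumes P: "0 \<le> P" "P < lam" and P': "0 \<le> P'" "P' < lam" and near: "(lam - P) + P' < \<theta>"
  shows "((lam - P) + P') / L - 4 * R \<le> d (quasi_loop (real k * lam + P)) (quasi_loop (real (Suc k) * lam + P'))"
    and "d (quasi_loop (real k * lam + P)) (quasi_loop (real (Suc k) * lam + P')) \<le> L * ((lam - P) + P') + 4 * R"
proof -
  let ?z = "(lam - P) + P'" and ?path = "speed k * (lam - P) + speed (Suc k) * P'"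
  note bounds = speed_param_bounds[OF P, of k] and bounds' = speed_param_bounds[OF P', of "Suc k"]
  have "speed k * (lam - P) \<le> speed_max * \<theta>"
    using speed_bounds(2,3)[of k] speed_max_ge_1 near P P' by (intro mult_mono) auto
  then have "piece_len k - speed k * P \<le> mid_len k"
    using bounds(3) near_short mid_len_ge[of k] by linarith
  then have past_chord: "chord_len k \<le> speed k * P"
    unfolding piece_len_def by simp
  have path: "(piece_len k - speed k * P) + speed (Suc k) * P' = ?path"
    using bounds(3) by simp
  have eqs: "quasi_loop (real k * lam + P) = piece k (speed k * P)"
    "quasi_loop (real (Suc k) * lam + P') = piece (Suc k) (speed (Suc k) * P')"
    using quasi_loop_eq[OF P, of k] quasi_loop_eq[OF P', of "Suc k"] by simp_all
  have "speed_min * ?z \<le> ?path" "?path \<le> speed_max * ?z"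
    using speed_bounds(1,2)[of k] speed_bounds(1,2)[of "Suc k"] P P'
    by (simp_all add: distrib_left add_mono mult_right_mono)
  then have "?z / L \<le> ?path / L0" "?path \<le> L * ?z"
    using P P' by (auto intro: div_L_le_div_L0 le_L_mult)
  then show "?z / L - 4 * R \<le> d (quasi_loop (real k * lam + P)) (quasi_loop (real (Suc k) * lam + P'))"
    and "d (quasi_loop (real k * lam + P)) (quasi_loop (real (Suc k) * lam + P')) \<le> L * ?z + 4 * R"
    using piece_dist_next_ge[OF past_chord bounds(2) bounds'(1,2)]
      piece_dist_next_le[OF past_chord bounds(2) bounds'(1,2)] R_nonneg
    unfolding eqs path by linarith+
qed

lemma quasi_loop_dist_far_le:
  assumes P: "0 \<le> P" "P < lam" and P': "0 \<le> P'" "P' < lam" and "k < j"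
    and far: "\<theta> \<le> (real j - real k) * lam + P' - P"
  shows "d (quasi_loop (real k * lam + P)) (quasi_loop (real j * lam + P'))
    \<le> L * ((real j - real k) * lam + P' - P) + 4 * R"
proof -
  let ?x = "quasi_loop (real k * lam + P)" and ?y = "quasi_loop (real j * lam + P')"
  let ?z = "(real j - real k) * lam + P' - P" and ?r = "cut_bound + 2 * R"
  define q where "q = j - Suc k"
  have j: "Suc (Suc k) + q = Suc j" and z: "?z = (lam - P) + real q * lam + P'"
    using \<open>k < j\<close> by (simp_all add: q_def of_nat_diff algebra_simps)
  have in_X: "?x \<in> X" "?y \<in> X" using P P' by (simp_all add: quasi_loop_in)
  have "d ?x ?y \<le> d ?x (vert (Suc (Suc k))) + d (vert (Suc (Suc k))) (vert (Suc j)) + d (vert (Suc j)) ?y"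
    using triangle[OF in_X(1) vert_in in_X(2), of "Suc (Suc k)"]
      triangle[OF vert_in vert_in in_X(2), of "Suc (Suc k)" "Suc j"] by linarith
  also have "\<dots> \<le> (speed_max * (lam - P) + ?r) + real q * (speed_max * lam) + (speed_max * P' + ?r)"
  proof (intro add_mono)
    show "d ?x (vert (Suc (Suc k))) \<le> speed_max * (lam - P) + ?r"
      using quasi_loop_dist_vert(2)[OF P] by (simp add: add.assoc)
    have "d (vert (Suc (Suc k))) (vert (Suc j)) \<le> real q * (K * lam)"
      using vert_dist_add[of "Suc (Suc k)" q] unfolding j .
    also have "\<dots> \<le> real q * (speed_max * lam)"
      using K_le_speed_max lam_pos by (intro mult_left_mono) auto
    finally show "d (vert (Suc (Suc k))) (vert (Suc j)) \<le> real q * (speed_max * lam)" .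
    show "d (vert (Suc j)) ?y \<le> speed_max * P' + ?r"
      using quasi_loop_dist_vert(1)[OF P'] commute by (simp add: add.assoc)
  qed
  also have "\<dots> = speed_max * ?z + 2 * ?r"
    unfolding z by (simp add: algebra_simps)
  also have "\<dots> \<le> L * ?z + 4 * R"
  proof -
    have "(L - speed_max) * \<theta> \<le> (L - speed_max) * ?z"
      using far speed_max_le by (intro mult_left_mono) auto
    then have "L * \<theta> - speed_max * \<theta> \<le> L * ?z - speed_max * ?z"
      by (simp add: left_diff_distrib)
    moreover have "2 * ?r \<le> L * \<theta> - speed_max * \<theta>"
      using near_upper by (simp add: left_diff_distrib)
    ultimately show ?thesis using R_nonneg by linarith
  qed
  finally show ?thesis .
qed

lemma quasi_loop_dist_ge_via_vertices:
  assumes P: "0 \<le> P" "P < lam" and P': "0 \<le> P'" "P' < lam"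
  shows "lam * cyclic_dist n (Suc k) (Suc (Suc j)) / K - speed_max * (P + (lam - P')) - 2 * (cut_bound + 2 * R)
    \<le> d (quasi_loop (real k * lam + P)) (quasi_loop (real j * lam + P'))"
proof -
  let ?x = "quasi_loop (real k * lam + P)" and ?y = "quasi_loop (real j * lam + P')"
  let ?r = "cut_bound + 2 * R"
  have in_X: "?x \<in> X" "?y \<in> X" using P P' by (simp_all add: quasi_loop_in)
  have "lam * cyclic_dist n (Suc k) (Suc (Suc j)) / K \<le> d (vert (Suc k)) (vert (Suc (Suc j)))"
    by (rule vert_dist_bounds(1))
  also have "\<dots> \<le> d (vert (Suc k)) ?x + d ?x ?y + d ?y (vert (Suc (Suc j)))"
    using triangle[OF vert_in in_X(1) vert_in, of "Suc k" "Suc (Suc j)"]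
      triangle[OF in_X(1) in_X(2) vert_in, of "Suc (Suc j)"] by linarith
  also have "\<dots> \<le> (speed_max * P + ?r) + d ?x ?y + (speed_max * (lam - P') + ?r)"
    using quasi_loop_dist_vert(1)[OF P, of k] quasi_loop_dist_vert(2)[OF P', of j] commute
    by (intro add_mono) (simp_all add: add.assoc)
  finally show ?thesis by (simp add: algebra_simps)
qed

lemma quasi_loop_dist_far_ge:
  assumes P: "0 \<le> P" "P < lam" and P': "0 \<le> P'" "P' < lam" and "k < j"
    and far: "\<theta> \<le> (real j - real k) * lam + P' - P" and half: "(real j - real k) * lam + P' - P \<le> real n * lam / 2"
  shows "((real j - real k) * lam + P' - P) / L \<le> d (quasi_loop (real k * lam + P)) (quasi_loop (real j * lam + P'))"
proof -
  let ?z = "(real j - real k) * lam + P' - P" and ?r = "cut_bound + 2 * R"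
  define q where "q = Suc j - k"
  define e where "e = P + (lam - P')"
  have e: "0 \<le> e" "e \<le> 2 * lam" using P P' by (auto simp: e_def)
  have qz: "real q * lam = ?z + e" and j: "Suc (Suc j) = Suc k + q"
    using \<open>k < j\<close> by (simp_all add: q_def e_def of_nat_diff algebra_simps)
  have "real q * lam \<le> (real n / 2 + 2) * lam"
    using qz half e by (simp add: algebra_simps)
  then have q: "real q \<le> real n / 2 + 2" using lam_pos by simp
  then have "cyclic_dist n (Suc k) (Suc (Suc j)) = min (real q) (real n - real q)"
    unfolding j using n_ge_6 by (intro cyclic_dist_add) linarith
  then have lower: "lam * min (real q) (real n - real q) / K - speed_max * e - 2 * ?r
      \<le> d (quasi_loop (real k * lam + P)) (quasi_loop (real j * lam + P'))"
    using quasi_loop_dist_ge_via_vertices[OF P P', of k j] unfolding e_def by simp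
  show ?thesis
  proof (cases "real q \<le> real n - real q")
    case True
    have "lam * min (real q) (real n - real q) = ?z + e"
      using True qz by (simp add: min_def mult.commute)
    then have "lam * min (real q) (real n - real q) / K = ?z / K + e / K"
      by (simp add: add_divide_distrib)
    moreover have "\<theta> * (1 / K - 1 / L) \<le> ?z * (1 / K - 1 / L)"
      using far K_le_L K_gt_1 by (intro mult_right_mono) (auto simp: frac_le)
    moreover have "?z * (1 / K - 1 / L) = ?z / K - ?z / L"
      by (simp add: right_diff_distrib)
    moreover have "1 / K \<le> 1" using K_gt_1 by simp
    then have "1 / K \<le> speed_max" using speed_max_ge_1 by linarith
    then have "(speed_max - 1 / K) * e \<le> (speed_max - 1 / K) * (2 * lam)"
      using e by (intro mult_left_mono) auto
    moreover have "(speed_max - 1 / K) * e = speed_max * e - e / K"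
      "(speed_max - 1 / K) * (2 * lam) = 2 * lam * (speed_max - 1 / K)"
      by (simp_all add: algebra_simps)
    ultimately show ?thesis
      using lower near_lower by linarith
  next
    case False
    have "lam * (real n / 2 - 2) / K \<le> lam * min (real q) (real n - real q) / K"
      using False q lam_pos K_gt_1 by (simp add: min_def divide_right_mono)
    moreover have "speed_max * e \<le> 2 * lam * speed_max"
      using e speed_max_ge_1 by (simp add: mult_left_mono mult.commute)
    moreover have "?z / L \<le> real n * lam / (2 * L)"
      using divide_right_mono[OF half, of L] speed_max_ge_1 speed_max_le by simp
    ultimately show ?thesis
      using lower far_lower by linarith
  qed
qed

lemma piece_offset_cases:
  assumes P: "0 \<le> P" "P < lam" and P': "0 \<le> P'" "P' < lam"
    and z: "0 \<le> z" "z = (real j - real k) * lam + P' - P"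
  obtains (same) "j = k" | (adjacent) "j = Suc k" "z < \<theta>" | (far) "k < j" "\<theta> \<le> z"
proof -
  have "real k * lam < (real j + 1) * lam"
    using z P P' by (simp add: algebra_simps)
  then have "k \<le> j" using lam_pos by (simp add: mult_less_cancel_right_pos)
  show ?thesis
  proof (cases "j = k")
    case False
    show ?thesis
    proof (cases "\<theta> \<le> z")
      case near: False
      have "(real j - real k - 1) * lam < lam"
        using z near theta_le_lam P P' by (simp add: algebra_simps)
      then have "j = Suc k"
        using False \<open>k \<le> j\<close> lam_pos by (simp add: mult_less_cancel_right_pos)
      then show ?thesis using near that(2) by simp
    qed (use False \<open>k \<le> j\<close> that(3) in simp)
  qed (use that(1) in simp)
qed

lemma quasi_loop_dist_forward:
  assumes x: "0 \<le> x" and z: "0 \<le> z" "z \<le> real n * lam / 2"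
  shows "z / L - 4 * R \<le> d (quasi_loop x) (quasi_loop (x + z)) \<and>
    d (quasi_loop x) (quasi_loop (x + z)) \<le> L * z + 4 * R"
proof -
  define y where "y = x + z"
  obtain k P where P: "0 \<le> P" "P < lam" and xk: "x = real k * lam + P"
    using quasi_loop_decomp[OF x] .
  have "0 \<le> y" using x z by (simp add: y_def)
  then obtain j P' where P': "0 \<le> P'" "P' < lam" and yj: "y = real j * lam + P'"
    by (rule quasi_loop_decomp)
  have zj: "z = (real j - real k) * lam + P' - P"
    using xk yj by (simp add: y_def algebra_simps)
  have "z / L - 4 * R \<le> d (quasi_loop x) (quasi_loop y) \<and> d (quasi_loop x) (quasi_loop y) \<le> L * z + 4 * R"
  proof (cases rule: piece_offset_cases[OF P P' z(1) zj, case_names same adjacent far])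
    case same
    then have "P \<le> P'" and z_eq: "z = P' - P" using zj z by simp_all
    then show ?thesis
      using quasi_loop_dist_same_piece[OF P(1) _ P'(2), of k] unfolding xk yj same z_eq by blast
  next
    case adjacent
    then have z_eq: "z = (lam - P) + P'" using zj by (simp add: algebra_simps)
    show ?thesis
      using quasi_loop_dist_adjacent[OF P P', of k] adjacent unfolding xk yj adjacent(1) z_eq by blast
  next
    case far
    have "z / L - 4 * R \<le> z / L" using R_nonneg by simp
    then show ?thesis
      using quasi_loop_dist_far_le[OF P P' far(1)] quasi_loop_dist_far_ge[OF P P' far(1)] z(2) far(2)
      unfolding xk yj zj by linarith
  qed
  then show ?thesis unfolding y_def .
qed

lemma quasi_loop_dist_ordered:
  assumes "0 \<le> p" "p \<le> q" "q < real n * lam"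
  shows "circle_dist (real n * lam) p q / L - 4 * R \<le> d (quasi_loop p) (quasi_loop q) \<and>
    d (quasi_loop p) (quasi_loop q) \<le> L * circle_dist (real n * lam) p q + 4 * R"
proof (cases "q - p \<le> real n * lam / 2")
  case True
  then have "circle_dist (real n * lam) p q = q - p"
    using assms unfolding circle_dist_def by (simp add: min_def)
  then show ?thesis
    using quasi_loop_dist_forward[of p "q - p"] True assms by simp
next
  case False
  then have "circle_dist (real n * lam) p q = real n * lam - (q - p)"
    using assms unfolding circle_dist_def by (simp add: min_def)
  moreover have "quasi_loop (q + (real n * lam - (q - p))) = quasi_loop p"
    using quasi_loop_add_len[OF assms(1)] by (simp add: algebra_simps)
  moreover have "0 \<le> real n * lam - (q - p)" "real n * lam - (q - p) \<le> real n * lam / 2"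
    using False assms by linarith+
  ultimately show ?thesis
    using quasi_loop_dist_forward[of q "real n * lam - (q - p)"] assms commute by simp
qed

lemma quasi_loop_quasi_isometric:
  "quasi_isometric_embedding (circle_pts (real n * lam)) (circle_dist (real n * lam)) X d L (4 * R) quasi_loop"
  unfolding quasi_isometric_embedding_def
proof (intro conjI ballI)
  show "quasi_loop ` circle_pts (real n * lam) \<subseteq> X"
    using quasi_loop_in by (auto simp: circle_pts_def)
  fix p q assume "p \<in> circle_pts (real n * lam)" "q \<in> circle_pts (real n * lam)"
  then have pq: "0 \<le> p" "p < real n * lam" "0 \<le> q" "q < real n * lam"
    by (auto simp: circle_pts_def)
  show "1 / L * circle_dist (real n * lam) p q - 4 * R \<le> d (quasi_loop p) (quasi_loop q)"
    and "d (quasi_loop p) (quasi_loop q) \<le> L * circle_dist (real n * lam) p q + 4 * R"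
    using quasi_loop_dist_ordered[of p q] quasi_loop_dist_ordered[of q p] pq circle_dist_commute commute
    by (cases "p \<le> q"; simp)+
qed

end

lemma small_delta_exists:
  fixes L L0 Q a b :: real
  assumes "1 < L" "1 < L0"
  obtains \<delta> where "0 < \<delta>" "\<delta> \<le> 1 / 2"
    "1 / L0 < 1 - (1 + 22 * Q) * \<delta>\<^sup>2"
    "(1 + a * \<delta>\<^sup>2) * \<delta> < 1 - (1 + 22 * Q) * \<delta>\<^sup>2"
    "2 * (a + b + 1) * \<delta> < 1 - \<delta>\<^sup>2 - 1 / L"
    "2 * b * \<delta> < L - 1 - a * \<delta>\<^sup>2"
proof -
  have lim: "((\<lambda>\<delta>::real. \<delta>) \<longlongrightarrow> 0) (at_right 0)" by (rule tendsto_ident_at)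
  have "1 / L0 < 1" "1 / L < 1" using assms by simp_all
  have "eventually (\<lambda>\<delta>. 0 < 1 - (1 + 22 * Q) * \<delta>\<^sup>2 - 1 / L0) (at_right 0)"
    by (rule order_tendstoD(1)[where y = "1 - 1 / L0"]) (use \<open>1 / L0 < 1\<close> in \<open>auto intro!: tendsto_eq_intros lim\<close>)
  moreover have "eventually (\<lambda>\<delta>. 0 < 1 - (1 + 22 * Q) * \<delta>\<^sup>2 - (1 + a * \<delta>\<^sup>2) * \<delta>) (at_right 0)"
    by (rule order_tendstoD(1)[where y = 1]) (auto intro!: tendsto_eq_intros lim)
  moreover have "eventually (\<lambda>\<delta>. 0 < 1 - \<delta>\<^sup>2 - 1 / L - 2 * (a + b + 1) * \<delta>) (at_right 0)"
    by (rule order_tendstoD(1)[where y = "1 - 1 / L"]) (use \<open>1 / L < 1\<close> in \<open>auto intro!: tendsto_eq_intros lim\<close>)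
  moreover have "eventually (\<lambda>\<delta>. 0 < L - 1 - a * \<delta>\<^sup>2 - 2 * b * \<delta>) (at_right 0)"
    by (rule order_tendstoD(1)[where y = "L - 1"]) (use assms in \<open>auto intro!: tendsto_eq_intros lim\<close>)
  moreover have "eventually (\<lambda>\<delta>. \<delta> \<in> {0<..<1 / 2}) (at_right (0::real))"
    by (rule eventually_at_right_real) simp
  ultimately have "eventually (\<lambda>\<delta>. \<delta> \<in> {0<..<1 / 2} \<and> 1 / L0 < 1 - (1 + 22 * Q) * \<delta>\<^sup>2 \<and>
      (1 + a * \<delta>\<^sup>2) * \<delta> < 1 - (1 + 22 * Q) * \<delta>\<^sup>2 \<and> 2 * (a + b + 1) * \<delta> < 1 - \<delta>\<^sup>2 - 1 / L \<and>
      2 * b * \<delta> < L - 1 - a * \<delta>\<^sup>2) (at_right 0)"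
    by eventually_elim auto
  then show ?thesis
    using that eventually_happens'[OF trivial_limit_at_right_real] by force
qed

locale quasi_circle_parameters =
  fixes L L0 Q a b \<delta> :: real and n :: nat
  assumes L0: "1 < L0" "L0 * L0 = L" and Q: "Q = L0 / (L0 - 1)"
    and a: "a = 4 + 11 * Q" and b: "b = 11 * Q + 2"
    and delta: "0 < \<delta>" "\<delta> \<le> 1 / 2"
      "1 / L0 < 1 - (1 + 22 * Q) * \<delta>\<^sup>2"
      "(1 + a * \<delta>\<^sup>2) * \<delta> < 1 - (1 + 22 * Q) * \<delta>\<^sup>2"
      "2 * (a + b + 1) * \<delta> < 1 - \<delta>\<^sup>2 - 1 / L"
      "2 * b * \<delta> < L - 1 - a * \<delta>\<^sup>2"
    and n: "6 \<le> n" "2 * (4 + 2 * a + 2 * b) \<le> real n * (1 - \<delta>\<^sup>2 - 1 / L)"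

lemma quasi_circle_parameters_exist:
  assumes L: "1 < L"
  shows "\<exists>L0 Q a b \<delta> n. quasi_circle_parameters L L0 Q a b \<delta> n"
proof -
  define L0 where "L0 = sqrt L"
  have L0: "1 < L0" "L0 * L0 = L" using L by (auto simp: L0_def)
  define Q where "Q = L0 / (L0 - 1)"
  define a where "a = 4 + 11 * Q"
  define b where "b = 11 * Q + 2"
  obtain \<delta> where \<delta>: "0 < \<delta>" "\<delta> \<le> 1 / 2"
    "1 / L0 < 1 - (1 + 22 * Q) * \<delta>\<^sup>2" "(1 + a * \<delta>\<^sup>2) * \<delta> < 1 - (1 + 22 * Q) * \<delta>\<^sup>2"
    "2 * (a + b + 1) * \<delta> < 1 - \<delta>\<^sup>2 - 1 / L" "2 * b * \<delta> < L - 1 - a * \<delta>\<^sup>2"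
    using small_delta_exists[OF L L0(1)] by blast
  have "0 \<le> 2 * (a + b + 1) * \<delta>"
    using L0 \<delta>(1) by (simp add: a_def b_def Q_def)
  then have gap: "0 < 1 - \<delta>\<^sup>2 - 1 / L" using \<delta>(5) by linarith
  obtain m :: nat where "2 * (4 + 2 * a + 2 * b) / (1 - \<delta>\<^sup>2 - 1 / L) \<le> real m"
    using real_arch_simple by blast
  then have m: "2 * (4 + 2 * a + 2 * b) \<le> real m * (1 - \<delta>\<^sup>2 - 1 / L)"
    using gap by (simp add: divide_le_eq)
  have "real m * (1 - \<delta>\<^sup>2 - 1 / L) \<le> real (m + 6) * (1 - \<delta>\<^sup>2 - 1 / L)"
    using gap by (intro mult_right_mono) auto
  then have "quasi_circle_parameters L L0 Q a b \<delta> (m + 6)"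
    using L0 \<delta> m by unfold_locales (simp_all add: Q_def a_def b_def)
  then show ?thesis by blast
qed

context quasi_circle_parameters
begin

lemma Q_pos: "0 < Q" and ab_nonneg: "0 \<le> a" "0 \<le> b"
  using L0 by (simp_all add: Q a b)

lemma L_pos: "0 < L"
  using L0 by (metis less_trans mult_pos_pos zero_less_one)

lemma delta_sq_le_1: "\<delta>\<^sup>2 \<le> 1"
  using delta power_mono[of \<delta> 1 2] by simp

end

text \<open>For \<open>K = 1 + \<delta>\<^sup>2\<close> and scales \<open>lam \<ge> R / \<delta>\<^sup>2\<close> the cuts have size \<open>O(\<delta>\<^sup>2 lam)\<close>,
  an order below the threshold \<open>\<theta> = \<delta> lam\<close> between near and far parameters.\<close>

locale quasi_circle_constants = quasi_circle_parameters +
  fixes K R lam :: real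
  assumes K: "K = 1 + \<delta>\<^sup>2" and R: "0 \<le> R" "R \<le> \<delta>\<^sup>2 * lam" and lam: "0 < lam"
begin

definition rho :: real where "rho = (2 * lam * (K - 1 / K) + 5 * R) * L0 / (L0 - 1)"

definition smax :: real where "smax = (K * lam + rho + 3 * R) / lam"

lemma K_gt_1: "1 < K"
  using delta by (simp add: K)

lemma inv_K_ge: "1 - \<delta>\<^sup>2 \<le> 1 / K"
proof -
  have "(1 - \<delta>\<^sup>2) * K = 1 - \<delta>\<^sup>2 * \<delta>\<^sup>2" by (simp add: K algebra_simps)
  then show ?thesis using K_gt_1 by (simp add: le_divide_eq)
qed

lemma lam_div_K_ge: "(1 - \<delta>\<^sup>2) * lam \<le> lam / K"
  using mult_right_mono[OF inv_K_ge, of lam] lam by simp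

lemma rho_le: "rho \<le> 11 * Q * \<delta>\<^sup>2 * lam"
proof -
  have "K - 1 / K \<le> 3 * \<delta>\<^sup>2" using inv_K_ge zero_le_power2[of \<delta>] unfolding K by linarith
  then have "2 * lam * (K - 1 / K) \<le> 2 * lam * (3 * \<delta>\<^sup>2)" using lam by (intro mult_left_mono) auto
  moreover have "2 * lam * (3 * \<delta>\<^sup>2) = 6 * (\<delta>\<^sup>2 * lam)" "11 * \<delta>\<^sup>2 * lam = 11 * (\<delta>\<^sup>2 * lam)"
    by (simp_all add: algebra_simps)
  ultimately have "2 * lam * (K - 1 / K) + 5 * R \<le> 11 * \<delta>\<^sup>2 * lam" using R by linarith
  then have "(2 * lam * (K - 1 / K) + 5 * R) * Q \<le> (11 * \<delta>\<^sup>2 * lam) * Q"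
    using Q_pos by (intro mult_right_mono) auto
  moreover have "rho = (2 * lam * (K - 1 / K) + 5 * R) * Q" unfolding rho_def Q by simp
  moreover have "(11 * \<delta>\<^sup>2 * lam) * Q = 11 * Q * \<delta>\<^sup>2 * lam" by simp
  ultimately show ?thesis by linarith
qed

lemma rho_R_le: "rho + 2 * R \<le> b * \<delta>\<^sup>2 * lam"
proof -
  have "b * \<delta>\<^sup>2 * lam = 11 * Q * \<delta>\<^sup>2 * lam + 2 * (\<delta>\<^sup>2 * lam)" by (simp add: b algebra_simps)
  then show ?thesis using rho_le R by linarith
qed

lemma smax_le: "smax \<le> 1 + a * \<delta>\<^sup>2"
proof -
  have "K * lam + rho + 3 * R \<le> (1 + a * \<delta>\<^sup>2) * lam"
    using rho_le R unfolding K a by (simp add: algebra_simps)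
  then show ?thesis unfolding smax_def using lam by (simp add: divide_le_eq)
qed

lemma rho_small: "2 * rho \<le> (1 - \<delta>\<^sup>2) * lam - L0 / L * lam"
proof -
  have "L0 / L = 1 / L0" using L0 by (auto simp: field_simps)
  moreover have "22 * Q * \<delta>\<^sup>2 * lam = 2 * (11 * Q * \<delta>\<^sup>2 * lam)" by simp
  then have "2 * rho \<le> 22 * Q * \<delta>\<^sup>2 * lam" using rho_le by linarith
  moreover have "1 / L0 * lam \<le> (1 - (1 + 22 * Q) * \<delta>\<^sup>2) * lam"
    using delta(3) lam by (intro mult_right_mono) auto
  ultimately show ?thesis by (simp add: algebra_simps)
qed

lemma cuts_short: "2 * rho < lam / K"
proof -
  have "0 < L0 / L * lam" using L0 L_pos lam by simp
  then show ?thesis using rho_small lam_div_K_ge by linarith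
qed

lemma speed_min_ge: "L0 / L \<le> (lam / K - 2 * rho) / lam"
proof -
  have "L0 / L * lam \<le> lam / K - 2 * rho" using rho_small lam_div_K_ge by linarith
  then show ?thesis using lam by (simp add: le_divide_eq)
qed

lemma speed_max_le: "smax \<le> L"
  using smax_le delta(6) mult_nonneg_nonneg[OF ab_nonneg(2) less_imp_le[OF delta(1)]] by linarith

lemma near_short: "smax * (\<delta> * lam) \<le> lam / K - 2 * rho"
proof -
  have "smax * (\<delta> * lam) \<le> ((1 + a * \<delta>\<^sup>2) * \<delta>) * lam"
    using smax_le delta lam mult_right_mono[of smax "1 + a * \<delta>\<^sup>2" "\<delta> * lam"] by (simp add: algebra_simps)
  also have "\<dots> \<le> (1 - (1 + 22 * Q) * \<delta>\<^sup>2) * lam"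
    using delta(4) lam by (intro mult_right_mono) auto
  also have "\<dots> \<le> lam / K - 2 * rho"
    using lam_div_K_ge rho_le by (simp add: algebra_simps)
  finally show ?thesis .
qed

lemma near_lower: "2 * lam * (smax - 1 / K) + 2 * (rho + 2 * R) \<le> \<delta> * lam * (1 / K - 1 / L)"
proof -
  have "smax - 1 / K \<le> (a + 1) * \<delta>\<^sup>2" using smax_le inv_K_ge by (simp add: algebra_simps)
  then have "2 * lam * (smax - 1 / K) + 2 * (rho + 2 * R) \<le> 2 * lam * ((a + 1) * \<delta>\<^sup>2) + 2 * (b * \<delta>\<^sup>2 * lam)"
    using rho_R_le lam by (intro add_mono mult_left_mono) auto
  also have "\<dots> = \<delta> * lam * (2 * (a + b + 1) * \<delta>)" by (simp add: power2_eq_square algebra_simps)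
  also have "\<dots> \<le> \<delta> * lam * (1 / K - 1 / L)"
    using delta(1,5) lam inv_K_ge by (intro mult_left_mono) auto
  finally show ?thesis .
qed

lemma near_upper: "2 * (rho + 2 * R) \<le> (L - smax) * (\<delta> * lam)"
proof -
  have "2 * (rho + 2 * R) \<le> (2 * b * \<delta>) * (\<delta> * lam)"
    using rho_R_le by (simp add: power2_eq_square algebra_simps)
  also have "\<dots> \<le> (L - smax) * (\<delta> * lam)"
    using delta(1,6) smax_le lam by (intro mult_right_mono) auto
  finally show ?thesis .
qed

lemma far_lower: "real n * lam / (2 * L) \<le> lam * (real n / 2 - 2) / K - 2 * lam * smax - 2 * (rho + 2 * R)"
proof -
  define T where "T = (real n / 2 - 2) * (1 - \<delta>\<^sup>2)"
  define Z where "Z = real n * (1 - \<delta>\<^sup>2 - 1 / L)"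
  have "T - 2 * (1 + a * \<delta>\<^sup>2) - 2 * b * \<delta>\<^sup>2 - real n / (2 * L)
      = Z / 2 - 4 - 2 * (a * \<delta>\<^sup>2) - 2 * (b * \<delta>\<^sup>2) + 2 * \<delta>\<^sup>2"
    unfolding T_def Z_def using L_pos by (simp add: field_simps)
  moreover have "8 + 4 * a + 4 * b \<le> Z"
    using n(2) by (simp add: Z_def)
  moreover have "a * \<delta>\<^sup>2 \<le> a" "b * \<delta>\<^sup>2 \<le> b"
    using ab_nonneg delta_sq_le_1 by (simp_all add: mult_left_le)
  ultimately have key: "real n / (2 * L) \<le> T - 2 * (1 + a * \<delta>\<^sup>2) - 2 * b * \<delta>\<^sup>2"
    using zero_le_power2[of \<delta>] by linarith
  have "lam * ((real n / 2 - 2) * (1 - \<delta>\<^sup>2)) \<le> lam * (real n / 2 - 2) / K"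
    using mult_left_mono[OF lam_div_K_ge, of "real n / 2 - 2"] n(1) by (simp add: ac_simps)
  moreover have "2 * lam * smax \<le> lam * (2 * (1 + a * \<delta>\<^sup>2))"
    using mult_left_mono[OF smax_le, of "2 * lam"] lam by (simp add: algebra_simps)
  moreover have "2 * (rho + 2 * R) \<le> lam * (2 * b * \<delta>\<^sup>2)"
    using rho_R_le by (simp add: algebra_simps)
  moreover have "real n * lam / (2 * L) \<le> lam * ((real n / 2 - 2) * (1 - \<delta>\<^sup>2) - 2 * (1 + a * \<delta>\<^sup>2) - 2 * b * \<delta>\<^sup>2)"
    using mult_left_mono[OF key, of lam] lam unfolding T_def by (simp add: algebra_simps)
  ultimately show ?thesis by (simp add: algebra_simps)
qed

end

lemma long_quasi_circles_if_approximates_ngons: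
  assumes X: "Metric_space X d" and R: "0 \<le> R" and geo: "rough_geodesic_space X d R"
    and ngons: "approximates_ngons X d" and L: "1 < L"
  shows "\<exists>c f. 0 < c \<and> quasi_isometric_embedding (circle_pts c) (circle_dist c) X d L (4 * R) f \<and> B < c"
proof -
  obtain L0 Q a b \<delta> n where par: "quasi_circle_parameters L L0 Q a b \<delta> n"
    using quasi_circle_parameters_exist[OF L] by blast
  then have L0: "1 < L0" and \<delta>: "0 < \<delta>" and n: "6 \<le> n"
    by (simp_all add: quasi_circle_parameters_def)
  define K where "K = 1 + \<delta>\<^sup>2"
  have K: "1 < K" using \<delta> by (simp add: K_def)
  obtain lam f where lam: "max (max B 0) (R / \<delta>\<^sup>2) < lam"
    and f: "bilipschitz_embedding (cycle_verts n) (scaled_cycle_dist lam n) X d K f"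
    using ngons K n unfolding approximates_ngons_def by (meson order_trans one_le_numeral numeral_le_iff semiring_norm(69))
  have "0 < lam" "R \<le> \<delta>\<^sup>2 * lam" using lam \<delta> by (simp_all add: divide_less_eq mult.commute)
  interpret C: quasi_circle_constants L L0 Q a b \<delta> n K R lam
    using par R \<open>0 < lam\<close> \<open>R \<le> \<delta>\<^sup>2 * lam\<close>
    by (intro quasi_circle_constants.intro quasi_circle_constants_axioms.intro) (simp_all add: K_def)
  interpret P: cut_ngon X d R lam K n f L0
    using R geo K \<open>0 < lam\<close> n f L0
    by (intro cut_ngon.intro cut_ngon_axioms.intro rough_ngon.intro rough_ngon_axioms.intro X) auto
  have cut_bound: "P.cut_bound = C.rho"
    unfolding P.cut_bound_def C.rho_def ..
  interpret P: short_cut_ngon X d R lam K n f L0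
    using C.cuts_short
    by (intro short_cut_ngon.intro short_cut_ngon_axioms.intro P.cut_ngon_axioms) (simp add: cut_bound)
  have speeds: "P.speed_min = (lam / K - 2 * C.rho) / lam" "P.speed_max = C.smax"
    unfolding P.speed_min_def P.speed_max_def C.smax_def cut_bound by simp_all
  interpret P: quasi_circle_ngon X d R lam K n f L0 L "\<delta> * lam"
    using n \<delta> \<open>0 < lam\<close> C.speed_min_ge C.speed_max_le C.near_short C.near_lower C.near_upper
      C.far_lower
    by (intro quasi_circle_ngon.intro quasi_circle_ngon_axioms.intro P.short_cut_ngon_axioms)
      (simp_all add: speeds cut_bound mult.commute mult.left_commute)
  have "lam \<le> real n * lam" using n \<open>0 < lam\<close> by simp
  then have "B < real n * lam" using lam by linarith
  then show ?thesis
    using P.quasi_loop_quasi_isometric \<open>0 < lam\<close> n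
    by (intro exI[of _ "real n * lam"] exI[of _ P.quasi_loop]) auto
qed

theorem corollary3p11:
  fixes X :: "'a set" and d :: "'a \<Rightarrow> 'a \<Rightarrow> real" and R :: real
  assumes "R \<ge> 0"
    and "Metric_space X d"
    and "rough_geodesic_space X d R"
  shows "(strongly_shortcut X d R \<longleftrightarrow>
           (\<exists>L>1. \<exists>B. \<forall>c f. c > 0 \<and>
              quasi_isometric_embedding (circle_pts c) (circle_dist c) X d L (4 * R) f \<longrightarrow> c \<le> B))
       \<and> (strongly_shortcut X d R \<longleftrightarrow>
           (\<exists>L>1. \<forall>C\<ge>0. \<exists>B. \<forall>c f. c > 0 \<and>
              quasi_isometric_embedding (circle_pts c) (circle_dist c) X d L C f \<longrightarrow> c \<le> B))
       \<and> (strongly_shortcut X d R \<longleftrightarrow> \<not> approximates_ngons X d)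
       \<and> (strongly_shortcut X d R \<longleftrightarrow> \<not> cone_contains_unit_circle X d)"
proof -
  let ?long = "\<lambda>L C. \<forall>B. \<exists>c f. c > 0 \<and>
    quasi_isometric_embedding (circle_pts c) (circle_dist c) X d L C f \<and> B < c"
  have cone: "strongly_shortcut X d R \<longleftrightarrow> \<not> cone_contains_unit_circle X d"
    and ngons: "strongly_shortcut X d R \<longleftrightarrow> \<not> approximates_ngons X d"
    using cone_contains_unit_circle_if_not_strongly_shortcut[OF assms(2,1)]
      approximates_ngons_if_cone_contains_unit_circle[OF assms(2)]
      not_strongly_shortcut_if_approximates_ngons[OF assms(2,1,3)]
    by blast+
  have "approximates_ngons X d \<Longrightarrow> \<forall>L>1. ?long L (4 * R)"
    using long_quasi_circles_if_approximates_ngons[OF assms(2,1,3)] by blast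
  moreover have "(\<forall>L>1. \<exists>C\<ge>0. ?long L C) \<Longrightarrow> approximates_ngons X d"
    by (rule approximates_ngons_if_long_quasi_circles[OF assms(2)])
  moreover have "0 \<le> 4 * R" using assms(1) by simp
  ultimately have ss_4R: "strongly_shortcut X d R \<longleftrightarrow> \<not> (\<forall>L>1. ?long L (4 * R))"
    and ss_any: "strongly_shortcut X d R \<longleftrightarrow> \<not> (\<forall>L>1. \<exists>C\<ge>0. ?long L C)"
    using ngons by blast+
  have bounded_4R: "\<not> (\<forall>L>1. ?long L (4 * R)) \<longleftrightarrow> (\<exists>L>1. \<exists>B. \<forall>c f. c > 0 \<and>
      quasi_isometric_embedding (circle_pts c) (circle_dist c) X d L (4 * R) f \<longrightarrow> c \<le> B)"
    by (meson not_le)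
  have bounded_any: "\<not> (\<forall>L>1. \<exists>C\<ge>0. ?long L C) \<longleftrightarrow> (\<exists>L>1. \<forall>C\<ge>0. \<exists>B. \<forall>c f. c > 0 \<and>
      quasi_isometric_embedding (circle_pts c) (circle_dist c) X d L C f \<longrightarrow> c \<le> B)"
    by (meson not_le)
  show ?thesis
    using trans[OF ss_4R bounded_4R] trans[OF ss_any bounded_any] ngons cone by blast
qed

end
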